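(* Let $H,H_0$ be selfadjoint nonnegative operators in a separable Hilbert space such that $e^{-tH}-e^{-tH_0}$ is trace class for all $t>0$, and suppose (1) as $t\to0^+$, $\mathrm{Tr}(e^{-tH}-e^{-tH_0})\sim\sum_{j\ge0}a_jt^{\alpha_j}$ with $-\infty<\alpha_0<\alpha_1<\cdots$, $\alpha_j\to\infty$; (2) there are $b_0\in\mathbb{C}$, $\rho>0$ with $\mathrm{Tr}(e^{-tH}-e^{-tH_0})=b_0+O(t^{-\rho})$ as $t\to\infty$. Then as $\lambda\to0^+$, $$\log\det(H+\lambda,H_0+\lambda)=b_0\log\lambda+\log\det(H,H_0)+o(1).$$
   Context: Relative zeta function: $\zeta_1(s,H,H_0)=\frac{1}{\Gamma(s)}\int_0^1t^{s-1}\mathrm{Tr}(e^{-tH}-e^{-tH_0})dt$ (for $\mathrm{Re}\,s>-\alpha_0$, meromorphically continued to $\mathbb{C}$), $\zeta_2(s,H,H_0)=\frac{1}{\Gamma(s)}\int_1^\infty t^{s-1}\mathrm{Tr}(e^{-tH}-e^{-tH_0})dt$ (for $\mathrm{Re}\,s<0$), continued to $\mathrm{Re}\,s<\rho$ by $\zeta_2(s,H,H_0)=-\frac{b_0}{\Gamma(s+1)}+\frac{1}{\Gamma(s)}\int_1^\infty t^{s-1}(\mathrm{Tr}(e^{-tH}-e^{-tH_0})-b_0)dt$; both are holomorphic at $s=0$. $\zeta(s,H,H_0)=\zeta_1+\zeta_2$ and $\det(H,H_0)=\exp(-\frac{d}{ds}\zeta(s,H,H_0)|_{s=0})$. For $\lambda>0$,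 $\det(H+\lambda,H_0+\lambda)$ is defined in the same way with $H,H_0$ replaced by $H+\lambda,H_0+\lambda$. *)

theory Defs
  imports "HOL-Analysis.Analysis" "HOL-Complex_Analysis.Complex_Analysis" "HOL-Library.Landau_Symbols"
begin

text \<open>The relative heat trace theta(t) = Tr(e^{-tH} - e^{-tH_0}) enters only as a function of t > 0.\<close>

definition zeta1 :: "(real \<Rightarrow> complex) \<Rightarrow> real \<Rightarrow> complex \<Rightarrow> complex" where
  "zeta1 \<theta> \<alpha>0 = (SOME f. f meromorphic_on UNIV \<and>
     (\<forall>s. Re s > - \<alpha>0 \<longrightarrow>
        f s = rGamma s * integral {0..1} (\<lambda>t. complex_of_real t powr (s - 1) * \<theta> t)))"

text \<open>zeta_2 in its continued form, valid for Re s < rho.\<close>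
definition zeta2 :: "(real \<Rightarrow> complex) \<Rightarrow> complex \<Rightarrow> complex \<Rightarrow> complex" where
  "zeta2 \<theta> b0 s = - b0 * rGamma (s + 1)
     + rGamma s * integral {1..} (\<lambda>t. complex_of_real t powr (s - 1) * (\<theta> t - b0))"

text \<open>log det = - zeta'(0), zeta = zeta_1 + zeta_2 (zeta_1 taken with its removable singularity at 0 removed).\<close>
definition logdet :: "(real \<Rightarrow> complex) \<Rightarrow> real \<Rightarrow> complex \<Rightarrow> complex" where
  "logdet \<theta> \<alpha>0 b0 = - (deriv (remove_sings (zeta1 \<theta> \<alpha>0)) 0 + deriv (zeta2 \<theta> b0) 0)"

end

theory Submission
  imports Defs
begin

(* Write theta_l t = exp (-l t) * theta t for the relative heat trace of H + l and H_0 + l.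
   Both determinants are exp (- zeta'(0)), and zeta'(0) can be computed explicitly.  If
   theta t - sum_{j<N} a_j t^(alpha_j) = O(t^M) on (0,1] with M > 0, then
     rGamma s * (sum_j a_j / (s + alpha_j) + integral_0^1 t^(s-1) (theta t - sum_j a_j t^(alpha_j)) dt)
   continues zeta_1 meromorphically to Re s > -M; as rGamma has a simple zero at 0 with
   derivative 1, this gives zeta_1'(0) = sum_j a_j T(alpha_j) + integral_0^1 t^(-1) (remainder),
   where T(beta) = 1 / beta and T(0) = gamma.  Likewise
   zeta_2'(0) = - b_0 gamma + integral_1^oo t^(-1) (theta t - b_0).
   Multiplying the expansion of theta by the Taylor polynomial of exp (-l t) gives an expansion
   of theta_l whose coefficients are polynomial in l and whose remainder moves by O(l), so
   zeta_1'(0) is continuous at l = 0.  For large t, theta_l decays exponentially (its b_0 is 0),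
   and its integral differs from that of theta - b_0 by b_0 integral_1^oo exp (-l t) / t dt + o(1);
   this exponential integral is - ln l - gamma + o(1), which produces the term b_0 ln l. *)

section \<open>Mellin integrals of power-bounded functions\<close>

lemma norm_of_real_powr: "t > 0 \<Longrightarrow> norm (complex_of_real t powr s) = t powr Re s"
  by (simp add: norm_powr_real_powr)

lemma continuous_on_of_real_powr: "continuous_on {0<..} (\<lambda>t::real. complex_of_real t powr s)"
  by (intro continuous_on_powr_complex continuous_intros) auto

lemma of_real_powr_mult_of_real_powr:
  "t > 0 \<Longrightarrow> complex_of_real t powr s * of_real (t powr b) = complex_of_real t powr (s + of_real b)"
  by (simp add: powr_add powr_of_real)

lemma continuous_dominated_integrable:
  fixes g :: "'a::euclidean_space \<Rightarrow> 'b::euclidean_space"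
  assumes "continuous_on S g" "S \<in> sets lebesgue"
    and "\<And>x. x \<in> S \<Longrightarrow> norm (g x) \<le> h x" "h integrable_on S"
  shows "g integrable_on S" "norm (integral S g) \<le> integral S h"
proof -
  show g: "g integrable_on S"
    by (rule measurable_bounded_by_integrable_imp_integrable
        [OF continuous_imp_measurable_on_sets_lebesgue]) (use assms in auto)
  show "norm (integral S g) \<le> integral S h"
    by (rule integral_norm_bound_integral[OF g]) (use assms in auto)
qed

lemma has_integral_Icc_Ici_combine:
  fixes f :: "real \<Rightarrow> 'a::banach"
  assumes "f integrable_on {a..b}" "f integrable_on {b..}" "a \<le> b"
  shows "(f has_integral (integral {a..b} f + integral {b..} f)) {a..}"
proof -
  have "(f has_integral (integral {a..b} f + integral {b..} f)) ({a..b} \<union> {b..})"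
    by (rule has_integral_Un) (use assms in \<open>auto intro: negligible_subset[of "{b}"]\<close>)
  moreover have "{a..b} \<union> {b..} = {a..}" using assms(3) by auto
  ultimately show ?thesis by simp
qed

lemma mellin_0_bound:
  fixes R :: "real \<Rightarrow> complex"
  assumes cont: "continuous_on {0<..1} R"
    and bnd: "\<And>t. 0 < t \<Longrightarrow> t \<le> 1 \<Longrightarrow> norm (R t) \<le> C * t powr \<mu>"
    and pos: "Re s + \<mu> > 0" and e: "0 \<le> e" "e \<le> 1"
  shows "(\<lambda>t. of_real t powr (s - 1) * R t) integrable_on {0..e}"
    and "norm (integral {0..e} (\<lambda>t. of_real t powr (s - 1) * R t))
           \<le> C * e powr (Re s + \<mu>) / (Re s + \<mu>)"
proof -
  let ?f = "\<lambda>t. of_real t powr (s - 1) * R t" and ?h = "\<lambda>t. C * t powr (Re s + \<mu> - 1)"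
  have cont': "continuous_on {0<..<e} ?f"
    using e by (intro continuous_intros continuous_on_subset[OF continuous_on_of_real_powr]
        continuous_on_subset[OF cont]) auto
  have bnd': "norm (?f t) \<le> ?h t" if "t \<in> {0<..<e}" for t
  proof -
    have t: "0 < t" "t \<le> 1" using that e by auto
    have "norm (?f t) = t powr (Re s - 1) * norm (R t)"
      using t by (simp add: norm_mult norm_of_real_powr)
    also have "\<dots> \<le> t powr (Re s - 1) * (C * t powr \<mu>)"
      by (intro mult_left_mono bnd t) simp
    also have "\<dots> = ?h t"
      by (simp add: powr_add[symmetric] algebra_simps)
    finally show ?thesis .
  qed
  have "(?h has_integral C * (e powr (Re s + \<mu>) / (Re s + \<mu>))) {0..e}"
    using has_integral_mult_right[OF has_integral_powr_from_0[of "Re s + \<mu> - 1" e]] pos e by simp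
  then have h: "(?h has_integral C * e powr (Re s + \<mu>) / (Re s + \<mu>)) {0<..<e}"
    by (simp add: has_integral_Icc_iff_Ioo)
  note dom = continuous_dominated_integrable[OF cont' _ bnd' has_integral_integrable[OF h]]
  show "?f integrable_on {0..e}"
    using dom(1) by (simp add: integrable_on_Icc_iff_Ioo)
  show "norm (integral {0..e} ?f) \<le> C * e powr (Re s + \<mu>) / (Re s + \<mu>)"
    using dom(2) integral_unique[OF h] by (simp add: integral_open_interval_real)
qed

lemma mellin_inf_bound:
  fixes R :: "real \<Rightarrow> complex"
  assumes cont: "continuous_on {1..} R"
    and bnd: "\<And>t. 1 \<le> t \<Longrightarrow> norm (R t) \<le> C * t powr (-\<rho>)"
    and pos: "Re s < \<rho>" and T: "1 \<le> T"
  shows "(\<lambda>t. of_real t powr (s - 1) * R t) integrable_on {T..}"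
    and "norm (integral {T..} (\<lambda>t. of_real t powr (s - 1) * R t))
           \<le> C * T powr (Re s - \<rho>) / (\<rho> - Re s)"
proof -
  let ?f = "\<lambda>t. of_real t powr (s - 1) * R t" and ?h = "\<lambda>t. C * t powr (Re s - \<rho> - 1)"
  have cont': "continuous_on {T..} ?f"
    using T by (intro continuous_intros continuous_on_subset[OF continuous_on_of_real_powr]
        continuous_on_subset[OF cont]) auto
  have bnd': "norm (?f t) \<le> ?h t" if "t \<in> {T..}" for t
  proof -
    have t: "0 < t" "1 \<le> t" using that T by auto
    have "norm (?f t) = t powr (Re s - 1) * norm (R t)"
      using t by (simp add: norm_mult norm_of_real_powr)
    also have "\<dots> \<le> t powr (Re s - 1) * (C * t powr (-\<rho>))"
      by (intro mult_left_mono bnd t) simp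
    also have "\<dots> = ?h t"
      by (simp add: powr_add[symmetric] algebra_simps)
    finally show ?thesis .
  qed
  have pw: "((\<lambda>t. t powr (Re s - \<rho> - 1)) has_integral -(T powr (Re s - \<rho>)) / (Re s - \<rho>)) {T..}"
    using has_integral_powr_to_inf[of "Re s - \<rho> - 1" T] pos T by simp
  have h: "(?h has_integral C * T powr (Re s - \<rho>) / (\<rho> - Re s)) {T..}"
    using has_integral_mult_right[where c = C, OF pw] pos by (simp add: minus_divide_right)
  note dom = continuous_dominated_integrable[OF cont' _ bnd' has_integral_integrable[OF h]]
  show "?f integrable_on {T..}"
    using dom(1) by simp
  show "norm (integral {T..} ?f) \<le> C * T powr (Re s - \<rho>) / (\<rho> - Re s)"
    using dom(2) integral_unique[OF h] by simp
qed

lemma holomorphic_on_uniform_approx: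
  assumes "open S" and hol: "\<And>n. F n holomorphic_on S"
    and approx: "\<And>x. x \<in> S \<Longrightarrow> \<exists>d>0. cball x d \<subseteq> S \<and>
                   (\<exists>b. b \<longlonglongrightarrow> 0 \<and> (\<forall>n. \<forall>s\<in>cball x d. norm (F n s - G s) \<le> b n))"
  shows "G holomorphic_on S"
proof (rule holomorphic_uniform_sequence[OF \<open>open S\<close> hol])
  fix x assume "x \<in> S"
  then obtain d b where d: "d > 0" "cball x d \<subseteq> S" and b: "b \<longlonglongrightarrow> 0"
    and le: "\<And>n s. s \<in> cball x d \<Longrightarrow> norm (F n s - G s) \<le> b n"
    using approx by blast
  have "uniform_limit (cball x d) F G sequentially"
    unfolding uniform_limit_iff
  proof (intro allI impI)
    fix e :: real assume "e > 0"
    with b have "eventually (\<lambda>n. b n < e) sequentially"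
      by (simp add: order_tendstoD(2))
    then show "\<forall>\<^sub>F n in sequentially. \<forall>s\<in>cball x d. dist (F n s) (G s) < e"
      by eventually_elim (auto simp: dist_norm intro: le_less_trans[OF le])
  qed
  then show "\<exists>d>0. cball x d \<subseteq> S \<and> uniform_limit (cball x d) F G sequentially"
    using d by blast
qed

lemma mellin_Icc_holomorphic:
  assumes cont: "continuous_on {a..b} R" and a: "a > 0"
  shows "(\<lambda>s. integral {a..b} (\<lambda>t. of_real t powr (s - 1) * R t)) holomorphic_on UNIV"
proof -
  have cont_powr: "continuous_on {a..b} (\<lambda>t. of_real t powr (s - 1) * R t)" for s
    by (intro continuous_on_mult cont continuous_on_subset[OF continuous_on_of_real_powr]) (use a in auto)
  have "(\<lambda>s. integral (cbox a b) (\<lambda>t. of_real t powr (s - 1) * R t)) holomorphic_on UNIV"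
  proof (rule leibniz_rule_holomorphic)
    fix s t assume "t \<in> cbox a b"
    then show "((\<lambda>s. of_real t powr (s - 1) * R t) has_field_derivative
                 Ln (of_real t) * of_real t powr (s - 1) * R t) (at s within UNIV)"
      using a by (auto intro!: derivative_eq_intros DERIV_chain2[OF has_field_derivative_powr_right])
  next
    show "(\<lambda>t. of_real t powr (s - 1) * R t) integrable_on cbox a b" for s
      using cont_powr by (simp add: integrable_continuous_interval)
  next
    have "continuous_on (UNIV \<times> {a..b})
            (\<lambda>p. Ln (of_real (snd p)) * of_real (snd p) powr (fst p - 1) * R (snd p))"
      by (intro continuous_intros continuous_on_powr_complex continuous_on_compose2[OF cont])
        (use a in \<open>force simp: nonpos_Reals_def\<close>)+
    then show "continuous_on (UNIV \<times> cbox a b)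
                 (\<lambda>(s, t). Ln (of_real t) * of_real t powr (s - 1) * R t)"
      by (simp add: case_prod_unfold)
  qed auto
  then show ?thesis by simp
qed

lemma cball_Re_bound: "s \<in> cball x d \<Longrightarrow> \<bar>Re s - Re x\<bar> \<le> d"
  using abs_Re_le_cmod[of "s - x"] by (simp add: dist_norm norm_minus_commute)

lemma mellin_0_tail_bound:
  fixes R :: "real \<Rightarrow> complex"
  assumes cont: "continuous_on {0<..1} R"
    and bnd: "\<And>t. 0 < t \<Longrightarrow> t \<le> 1 \<Longrightarrow> norm (R t) \<le> C * t powr \<mu>"
    and d: "0 < d" "d \<le> Re s + \<mu>" and \<epsilon>: "0 < \<epsilon>" "\<epsilon> \<le> 1"
  shows "norm (integral {\<epsilon>..1} (\<lambda>t. of_real t powr (s - 1) * R t)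
                - integral {0..1} (\<lambda>t. of_real t powr (s - 1) * R t)) \<le> C * \<epsilon> powr d / d"
proof -
  have C: "C \<ge> 0"
    using order_trans[OF norm_ge_zero bnd[of 1]] by simp
  have pos: "Re s + \<mu> > 0"
    using d by linarith
  have "(\<lambda>t. of_real t powr (s - 1) * R t) integrable_on {0..1}"
    by (rule mellin_0_bound(1)[OF cont bnd pos]) auto
  then have split: "integral {0..1} (\<lambda>t. of_real t powr (s - 1) * R t)
      = integral {0..\<epsilon>} (\<lambda>t. of_real t powr (s - 1) * R t)
        + integral {\<epsilon>..1} (\<lambda>t. of_real t powr (s - 1) * R t)"
    using \<epsilon> by (intro Henstock_Kurzweil_Integration.integral_combine[symmetric]) auto
  have "norm (integral {\<epsilon>..1} (\<lambda>t. of_real t powr (s - 1) * R t)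
               - integral {0..1} (\<lambda>t. of_real t powr (s - 1) * R t))
        = norm (integral {0..\<epsilon>} (\<lambda>t. of_real t powr (s - 1) * R t))"
    unfolding split by (simp add: norm_minus_commute)
  also have "\<dots> \<le> C * \<epsilon> powr (Re s + \<mu>) / (Re s + \<mu>)"
    using \<epsilon> by (intro mellin_0_bound(2)[OF cont bnd pos]) auto
  also have "\<dots> \<le> C * \<epsilon> powr d / d"
    using \<epsilon> d C by (intro mult_left_mono frac_le powr_mono' mult_nonneg_nonneg) auto
  finally show ?thesis .
qed

lemma mellin_inf_tail_bound:
  fixes R :: "real \<Rightarrow> complex"
  assumes cont: "continuous_on {1..} R"
    and bnd: "\<And>t. 1 \<le> t \<Longrightarrow> norm (R t) \<le> C * t powr (-\<rho>)"
    and d: "0 < d" "d \<le> \<rho> - Re s" and T: "1 \<le> T"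
  shows "norm (integral {1..T} (\<lambda>t. of_real t powr (s - 1) * R t)
                - integral {1..} (\<lambda>t. of_real t powr (s - 1) * R t)) \<le> C * T powr (-d) / d"
proof -
  have C: "C \<ge> 0"
    using order_trans[OF norm_ge_zero bnd[of 1]] by simp
  have pos: "Re s < \<rho>"
    using d by linarith
  have "((\<lambda>t. of_real t powr (s - 1) * R t) has_integral
          integral {1..T} (\<lambda>t. of_real t powr (s - 1) * R t)
          + integral {T..} (\<lambda>t. of_real t powr (s - 1) * R t)) {1..}"
    by (intro has_integral_Icc_Ici_combine mellin_inf_bound(1)[OF cont bnd pos] T
        integrable_continuous_interval continuous_intros continuous_on_subset[OF cont]
        continuous_on_subset[OF continuous_on_of_real_powr]) auto
  then have "norm (integral {1..T} (\<lambda>t. of_real t powr (s - 1) * R t)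
               - integral {1..} (\<lambda>t. of_real t powr (s - 1) * R t))
             = norm (integral {T..} (\<lambda>t. of_real t powr (s - 1) * R t))"
    by (simp add: integral_unique)
  also have "\<dots> \<le> C * T powr (Re s - \<rho>) / (\<rho> - Re s)"
    by (rule mellin_inf_bound(2)[OF cont bnd pos T])
  also have "\<dots> \<le> C * T powr (-d) / d"
    using T d C by (intro mult_left_mono frac_le powr_mono mult_nonneg_nonneg) auto
  finally show ?thesis .
qed

lemma mellin_0_holomorphic:
  fixes R :: "real \<Rightarrow> complex"
  assumes cont: "continuous_on {0<..1} R"
    and bnd: "\<And>t. 0 < t \<Longrightarrow> t \<le> 1 \<Longrightarrow> norm (R t) \<le> C * t powr \<mu>"
  shows "(\<lambda>s. integral {0..1} (\<lambda>t. of_real t powr (s - 1) * R t)) holomorphic_on {s. Re s > -\<mu>}"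
proof (rule holomorphic_on_uniform_approx)
  define \<epsilon> where "\<epsilon> n = inverse (real (Suc n))" for n
  have \<epsilon>: "0 < \<epsilon> n" "\<epsilon> n \<le> 1" for n
    unfolding \<epsilon>_def by (auto simp: inverse_le_1_iff)
  show "open {s. Re s > -\<mu>}"
    by (simp add: open_halfspace_Re_gt)
  show "(\<lambda>s. integral {\<epsilon> n..1} (\<lambda>t. of_real t powr (s - 1) * R t)) holomorphic_on {s. Re s > -\<mu>}" for n
    by (rule holomorphic_on_subset[OF mellin_Icc_holomorphic])
      (use \<epsilon>[of n] in \<open>auto intro: continuous_on_subset[OF cont]\<close>)
  fix x assume "x \<in> {s. Re s > -\<mu>}"
  define d where "d = (Re x + \<mu>) / 2"
  have d: "d > 0"
    using \<open>x \<in> _\<close> by (simp add: d_def)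
  have Re_s: "d \<le> Re s + \<mu>" if "s \<in> cball x d" for s
    using abs_le_D2[OF cball_Re_bound[OF that]] unfolding d_def by argo
  have "cball x d \<subseteq> {s. Re s > -\<mu>}"
  proof
    fix s assume "s \<in> cball x d"
    with Re_s d show "s \<in> {s. Re s > -\<mu>}"
      by fastforce
  qed
  moreover have "(\<lambda>n. C * \<epsilon> n powr d / d) \<longlonglongrightarrow> C * 0 powr d / d"
    unfolding \<epsilon>_def using d by (intro tendsto_intros LIMSEQ_inverse_real_of_nat) auto
  moreover have "\<forall>n. \<forall>s\<in>cball x d. norm (integral {\<epsilon> n..1} (\<lambda>t. of_real t powr (s - 1) * R t)
                   - integral {0..1} (\<lambda>t. of_real t powr (s - 1) * R t)) \<le> C * \<epsilon> n powr d / d"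
    using mellin_0_tail_bound[OF cont bnd d Re_s \<epsilon>] by blast
  ultimately show "\<exists>d>0. cball x d \<subseteq> {s. Re s > -\<mu>} \<and> (\<exists>b. b \<longlonglongrightarrow> 0 \<and> (\<forall>n. \<forall>s\<in>cball x d.
          norm (integral {\<epsilon> n..1} (\<lambda>t. of_real t powr (s - 1) * R t)
                - integral {0..1} (\<lambda>t. of_real t powr (s - 1) * R t)) \<le> b n))"
    using d by (intro exI[of _ d] conjI exI[of _ "\<lambda>n. C * \<epsilon> n powr d / d"]) simp_all
qed

lemma mellin_inf_holomorphic:
  fixes R :: "real \<Rightarrow> complex"
  assumes cont: "continuous_on {1..} R"
    and bnd: "\<And>t. 1 \<le> t \<Longrightarrow> norm (R t) \<le> C * t powr (-\<rho>)"
  shows "(\<lambda>s. integral {1..} (\<lambda>t. of_real t powr (s - 1) * R t)) holomorphic_on {s. Re s < \<rho>}"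
proof (rule holomorphic_on_uniform_approx)
  define T where "T n = real (Suc n)" for n
  have T: "1 \<le> T n" for n
    unfolding T_def by auto
  show "open {s. Re s < \<rho>}"
    by (simp add: open_halfspace_Re_lt)
  show "(\<lambda>s. integral {1..T n} (\<lambda>t. of_real t powr (s - 1) * R t)) holomorphic_on {s. Re s < \<rho>}" for n
    by (rule holomorphic_on_subset[OF mellin_Icc_holomorphic])
      (use T[of n] in \<open>auto intro: continuous_on_subset[OF cont]\<close>)
  fix x assume "x \<in> {s. Re s < \<rho>}"
  define d where "d = (\<rho> - Re x) / 2"
  have d: "d > 0"
    using \<open>x \<in> _\<close> by (simp add: d_def)
  have Re_s: "d \<le> \<rho> - Re s" if "s \<in> cball x d" for s
    using abs_le_D1[OF cball_Re_bound[OF that]] unfolding d_def by argo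
  have "filterlim T at_top sequentially"
    unfolding T_def by (rule filterlim_compose[OF filterlim_real_sequentially filterlim_Suc])
  then have lim: "(\<lambda>n. C * T n powr (-d) / d) \<longlonglongrightarrow> C * 0 / d"
    using d by (intro tendsto_intros tendsto_neg_powr) auto
  have "cball x d \<subseteq> {s. Re s < \<rho>}"
  proof
    fix s assume "s \<in> cball x d"
    with Re_s d show "s \<in> {s. Re s < \<rho>}"
      by fastforce
  qed
  moreover note lim
  moreover have "\<forall>n. \<forall>s\<in>cball x d. norm (integral {1..T n} (\<lambda>t. of_real t powr (s - 1) * R t)
                   - integral {1..} (\<lambda>t. of_real t powr (s - 1) * R t)) \<le> C * T n powr (-d) / d"
    using mellin_inf_tail_bound[OF cont bnd d Re_s T] by blast
  ultimately show "\<exists>d>0. cball x d \<subseteq> {s. Re s < \<rho>} \<and> (\<exists>b. b \<longlonglongrightarrow> 0 \<and> (\<forall>n. \<forall>s\<in>cball x d.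
          norm (integral {1..T n} (\<lambda>t. of_real t powr (s - 1) * R t)
                - integral {1..} (\<lambda>t. of_real t powr (s - 1) * R t)) \<le> b n))"
    using d by (intro exI[of _ d] conjI exI[of _ "\<lambda>n. C * T n powr (-d) / d"]) simp_all
qed

lemma eq_0_if_norm_le_powr:
  fixes D :: "'a::real_normed_vector"
  assumes a: "a > 0" and \<delta>: "\<delta> > 0" and le: "\<And>e. 0 < e \<Longrightarrow> e \<le> \<delta> \<Longrightarrow> norm D \<le> K * e powr a"
  shows "D = 0"
proof -
  have "((\<lambda>e. K * e powr a) \<longlongrightarrow> K * 0) (at_right 0)"
    using a by (intro tendsto_intros tendsto_zero_powrI[OF tendsto_ident_at tendsto_const])
      (auto intro: eventually_mono[OF eventually_at_right_less])
  moreover have "eventually (\<lambda>e. norm D \<le> K * e powr a) (at_right 0)"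
    using eventually_at_right_real[OF \<delta>] by eventually_elim (auto intro: le)
  ultimately have "norm D \<le> K * 0"
    using tendsto_le[OF trivial_limit_at_right_real _ tendsto_const] by blast
  then show ?thesis by simp
qed

lemma has_integral_of_real_powr:
  fixes z :: complex
  assumes "z \<noteq> 0" "0 < a" "a \<le> b"
  shows "((\<lambda>t. of_real t powr (z - 1)) has_integral (of_real b powr z - of_real a powr z) / z) {a..b}"
proof -
  have "((\<lambda>t. of_real t powr (z - 1)) has_integral of_real b powr z / z - of_real a powr z / z) {a..b}"
  proof (rule fundamental_theorem_of_calculus[OF assms(3)])
    fix x assume "x \<in> {a..b}"
    then have "x > 0"
      using assms by auto
    then have "((\<lambda>w. w powr z / z) has_field_derivative of_real x powr (z - 1)) (at (of_real x))"
      using assms by (auto intro!: derivative_eq_intros simp: nonpos_Reals_def)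
    then show "((\<lambda>t. of_real t powr z / z) has_vector_derivative of_real x powr (z - 1))
                 (at x within {a..b})"
      by (rule has_vector_derivative_real_field)
  qed
  then show ?thesis
    by (simp add: diff_divide_distrib)
qed

lemma has_integral_of_real_powr_0_1:
  assumes z: "Re z > 0"
  shows "((\<lambda>t. of_real t powr (z - 1)) has_integral 1 / z) {0..1}"
proof -
  let ?I = "\<lambda>a b. integral {a..b} (\<lambda>t. complex_of_real t powr (z - 1))"
  have cont1: "continuous_on {0<..1} (\<lambda>t. 1::complex)"
    by simp
  have bnd1: "norm (1::complex) \<le> 1 * t powr 0" if "0 < t" for t
    using that by simp
  note bound = mellin_0_bound[OF cont1 bnd1, of z, simplified]
  have int: "(\<lambda>t. of_real t powr (z - 1)) integrable_on {0..1}"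
    using bound(1)[of 1] z by simp
  have "?I 0 1 - 1 / z = 0"
  proof (rule eq_0_if_norm_le_powr[OF z zero_less_one])
    fix e :: real assume e: "0 < e" "e \<le> 1"
    have "?I 0 1 = ?I 0 e + ?I e 1"
      using e int by (intro Henstock_Kurzweil_Integration.integral_combine[symmetric]) auto
    moreover have "?I e 1 = (of_real 1 powr z - of_real e powr z) / z"
      using z e by (intro integral_unique has_integral_of_real_powr) auto
    ultimately have "?I 0 1 - 1 / z = ?I 0 e - of_real e powr z / z"
      by (simp add: diff_divide_distrib)
    also have "norm \<dots> \<le> norm (?I 0 e) + norm (of_real e powr z / z)"
      by (rule norm_triangle_ineq4)
    also have "\<dots> \<le> e powr Re z / Re z + e powr Re z / norm z"
      using bound(2)[of e] e z by (simp add: norm_divide norm_of_real_powr)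
    finally show "norm (?I 0 1 - 1 / z) \<le> (1 / Re z + 1 / norm z) * e powr Re z"
      by (simp add: algebra_simps)
  qed
  then show ?thesis
    using int by (simp add: has_integral_integrable_integral)
qed

lemma has_integral_mellin_powr:
  assumes "Re s + \<beta> > 0"
  shows "((\<lambda>t. of_real t powr (s - 1) * of_real (t powr \<beta>)) has_integral 1 / (s + of_real \<beta>)) {0..1}"
proof -
  have "((\<lambda>t. of_real t powr ((s + of_real \<beta>) - 1)) has_integral 1 / (s + of_real \<beta>)) {0..1}"
    by (rule has_integral_of_real_powr_0_1) (use assms in simp)
  then show ?thesis
  proof (rule has_integral_spike[of "{0}", rotated 2])
    fix t :: real assume "t \<in> {0..1} - {0}"
    then have "t > 0" by auto
    then show "of_real t powr (s - 1) * of_real (t powr \<beta>) = of_real t powr ((s + of_real \<beta>) - 1)"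
      using of_real_powr_mult_of_real_powr[of t "s - 1" \<beta>] by (simp add: algebra_simps)
  qed auto
qed

lemma bound_at_right_0_if_bigo:
  fixes f :: "real \<Rightarrow> 'a::real_normed_vector"
  assumes cont: "continuous_on {0<..1} f" and O: "(\<lambda>t. norm (f t)) \<in> O[at_right 0](\<lambda>t. t powr a)"
  shows "\<exists>C. \<forall>t. 0 < t \<longrightarrow> t \<le> 1 \<longrightarrow> norm (f t) \<le> C * t powr a"
proof -
  obtain c where "eventually (\<lambda>t. norm (norm (f t)) \<le> c * norm (t powr a)) (at_right 0)"
    using O by (rule landau_o.bigE)
  then obtain b0 where b0: "b0 > 0" "\<And>t. 0 < t \<Longrightarrow> t < b0 \<Longrightarrow> norm (f t) \<le> c * t powr a"
    unfolding eventually_at_right_field by auto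
  define b where "b = min b0 1"
  have b: "0 < b" "b \<le> 1" and near: "\<And>t. 0 < t \<Longrightarrow> t < b \<Longrightarrow> norm (f t) \<le> c * t powr a"
    using b0 by (auto simp: b_def)
  have "continuous_on {b..1} (\<lambda>t. norm (f t) / t powr a)"
    using b by (intro continuous_intros continuous_on_subset[OF cont]) auto
  from continuous_attains_sup[OF compact_Icc _ this]
  obtain B where B: "\<And>t. t \<in> {b..1} \<Longrightarrow> norm (f t) / t powr a \<le> B"
    using b by fastforce
  have "norm (f t) \<le> max c B * t powr a" if t: "0 < t" "t \<le> 1" for t
  proof (cases "t < b")
    case True
    then show ?thesis
      using near[OF t(1)] by (smt (verit) mult_right_mono max.cobounded1 powr_ge_zero)
  next
    case False
    then have "norm (f t) \<le> B * t powr a"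
      using B[of t] t by (simp add: divide_le_eq)
    then show ?thesis
      by (smt (verit) mult_right_mono max.cobounded2 powr_ge_zero)
  qed
  then show ?thesis
    by blast
qed

lemma bound_at_top_if_bigo:
  fixes f :: "real \<Rightarrow> 'a::real_normed_vector"
  assumes cont: "continuous_on {1..} f" and O: "(\<lambda>t. norm (f t)) \<in> O[at_top](\<lambda>t. t powr a)"
  shows "\<exists>C. \<forall>t. 1 \<le> t \<longrightarrow> norm (f t) \<le> C * t powr a"
proof -
  obtain c where "eventually (\<lambda>t. norm (norm (f t)) \<le> c * norm (t powr a)) at_top"
    using O by (rule landau_o.bigE)
  then obtain T0 where T0: "\<And>t. t \<ge> T0 \<Longrightarrow> norm (f t) \<le> c * t powr a"
    unfolding eventually_at_top_linorder by auto
  define T where "T = max T0 1"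
  have T: "1 \<le> T" and far: "\<And>t. t \<ge> T \<Longrightarrow> norm (f t) \<le> c * t powr a"
    using T0 by (auto simp: T_def)
  have "continuous_on {1..T} (\<lambda>t. norm (f t) / t powr a)"
    by (intro continuous_intros continuous_on_subset[OF cont]) auto
  from continuous_attains_sup[OF compact_Icc _ this]
  obtain B where B: "\<And>t. t \<in> {1..T} \<Longrightarrow> norm (f t) / t powr a \<le> B"
    using T by fastforce
  have "norm (f t) \<le> max c B * t powr a" if t: "1 \<le> t" for t
  proof (cases "t \<ge> T")
    case True
    then show ?thesis
      using far by (smt (verit) mult_right_mono max.cobounded1 powr_ge_zero)
  next
    case False
    then have "norm (f t) \<le> B * t powr a"
      using B[of t] t by (simp add: divide_le_eq)
    then show ?thesis
      by (smt (verit) mult_right_mono max.cobounded2 powr_ge_zero)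
  qed
  then show ?thesis
    by blast
qed

section \<open>Power expansions and the continuation of \<open>\<zeta>\<^sub>1\<close>\<close>

definition pow_sum :: "(complex \<times> real) list \<Rightarrow> real \<Rightarrow> complex" where
  "pow_sum xs t = (\<Sum>p\<leftarrow>xs. fst p * of_real (t powr snd p))"

definition has_expansion :: "(real \<Rightarrow> complex) \<Rightarrow> (complex \<times> real) list \<Rightarrow> real \<Rightarrow> real \<Rightarrow> bool" where
  "has_expansion \<phi> xs C M \<longleftrightarrow> (\<forall>t. 0 < t \<longrightarrow> t \<le> 1 \<longrightarrow> norm (\<phi> t - pow_sum xs t) \<le> C * t powr M)"

(* rGamma s / (s + beta); for beta = 0 the removable singularity rGamma s / s = rGamma (s + 1)
   at s = 0 is filled in. *)
definition mellin_term :: "real \<Rightarrow> complex \<Rightarrow> complex" where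
  "mellin_term \<beta> s = (if \<beta> = 0 then rGamma (s + 1) else rGamma s / (s + of_real \<beta>))"

definition mellin_sum :: "(complex \<times> real) list \<Rightarrow> complex \<Rightarrow> complex" where
  "mellin_sum xs s = (\<Sum>p\<leftarrow>xs. fst p * mellin_term (snd p) s)"

definition expansion_poles :: "(complex \<times> real) list \<Rightarrow> complex set" where
  "expansion_poles xs = (\<lambda>p. - of_real (snd p)) ` {p \<in> set xs. snd p \<noteq> 0}"

definition zeta1_ext :: "(complex \<times> real) list \<Rightarrow> (real \<Rightarrow> complex) \<Rightarrow> complex \<Rightarrow> complex" where
  "zeta1_ext xs \<phi> s = mellin_sum xs s
     + rGamma s * integral {0..1} (\<lambda>t. of_real t powr (s - 1) * (\<phi> t - pow_sum xs t))"

lemma pow_sum_Nil [simp]: "pow_sum [] t = 0"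
  by (simp add: pow_sum_def)

lemma pow_sum_Cons [simp]: "pow_sum (p # xs) t = fst p * of_real (t powr snd p) + pow_sum xs t"
  by (simp add: pow_sum_def)

lemma mellin_sum_Nil [simp]: "mellin_sum [] s = 0"
  by (simp add: mellin_sum_def)

lemma mellin_sum_Cons [simp]: "mellin_sum (p # xs) s = fst p * mellin_term (snd p) s + mellin_sum xs s"
  by (simp add: mellin_sum_def)

lemma finite_expansion_poles [simp]: "finite (expansion_poles xs)"
  by (simp add: expansion_poles_def)

lemma zero_notin_expansion_poles [simp]: "0 \<notin> expansion_poles xs"
  by (auto simp: expansion_poles_def)

lemma has_expansionD:
  "has_expansion \<phi> xs C M \<Longrightarrow> 0 < t \<Longrightarrow> t \<le> 1 \<Longrightarrow> norm (\<phi> t - pow_sum xs t) \<le> C * t powr M"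
  by (simp add: has_expansion_def)

lemma has_expansion_mono:
  assumes "has_expansion \<phi> xs C M'" "M \<le> M'"
  shows "has_expansion \<phi> xs (max C 0) M"
  unfolding has_expansion_def
proof (intro allI impI)
  fix t :: real assume t: "0 < t" "t \<le> 1"
  have "norm (\<phi> t - pow_sum xs t) \<le> C * t powr M'"
    using assms(1) t by (rule has_expansionD)
  also have "\<dots> \<le> max C 0 * t powr M"
    using t assms(2) by (intro mult_mono powr_mono') auto
  finally show "norm (\<phi> t - pow_sum xs t) \<le> max C 0 * t powr M" .
qed

lemma continuous_on_pow_sum: "continuous_on {0<..} (pow_sum xs)"
  by (induction xs) (auto intro!: continuous_intros simp: pow_sum_def[abs_def])

lemma continuous_on_expansion_remainder:
  "continuous_on {0<..1} \<phi> \<Longrightarrow> continuous_on {0<..1} (\<lambda>t. \<phi> t - pow_sum xs t)"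
  by (intro continuous_intros continuous_on_subset[OF continuous_on_pow_sum]) auto

lemma has_integral_mellin_pow_sum:
  assumes "\<And>p. p \<in> set xs \<Longrightarrow> Re s + snd p > 0"
  shows "((\<lambda>t. of_real t powr (s - 1) * pow_sum xs t) has_integral
           (\<Sum>p\<leftarrow>xs. fst p / (s + of_real (snd p)))) {0..1}"
  using assms
proof (induction xs)
  case (Cons p xs)
  have "((\<lambda>t. fst p * (of_real t powr (s - 1) * of_real (t powr snd p))
             + of_real t powr (s - 1) * pow_sum xs t) has_integral
          fst p * (1 / (s + of_real (snd p))) + (\<Sum>p\<leftarrow>xs. fst p / (s + of_real (snd p)))) {0..1}"
    using Cons by (intro has_integral_add has_integral_mult_right has_integral_mellin_powr) auto
  then show ?case
    by (simp add: algebra_simps)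
qed simp

lemma mellin_term_meromorphic: "mellin_term \<beta> meromorphic_on A"
proof (cases "\<beta> = 0")
  case False
  have "(\<lambda>s. rGamma s / (s + of_real \<beta>)) meromorphic_on A"
    by (intro meromorphic_intros analytic_on_imp_meromorphic_on analytic_intros)
  with False show ?thesis
    by (simp add: mellin_term_def[abs_def])
qed (simp add: mellin_term_def[abs_def] analytic_on_imp_meromorphic_on analytic_intros)

lemma mellin_sum_analytic: "mellin_sum xs analytic_on (UNIV - expansion_poles xs)"
proof (induction xs)
  case (Cons p xs)
  have "mellin_term (snd p) analytic_on (UNIV - expansion_poles (p # xs))"
  proof (cases "snd p = 0")
    case False
    then have "- of_real (snd p) \<in> expansion_poles (p # xs)"
      by (force simp: expansion_poles_def)
    with False show ?thesis
      unfolding mellin_term_def[abs_def] by (auto intro!: analytic_intros simp: add_eq_0_iff)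
  qed (simp add: mellin_term_def[abs_def] analytic_intros)
  moreover have "mellin_sum xs analytic_on (UNIV - expansion_poles (p # xs))"
    by (rule analytic_on_subset[OF Cons.IH]) (auto simp: expansion_poles_def)
  ultimately show ?case
    by (simp add: analytic_intros)
qed (simp add: mellin_sum_def[abs_def])

lemma mellin_sum_meromorphic: "mellin_sum xs meromorphic_on A"
  by (induction xs) (auto intro!: meromorphic_intros mellin_term_meromorphic simp: mellin_sum_def[abs_def])

lemma mellin_sum_eq: "s \<noteq> 0 \<Longrightarrow> mellin_sum xs s = rGamma s * (\<Sum>p\<leftarrow>xs. fst p / (s + of_real (snd p)))"
proof (induction xs)
  case (Cons p xs)
  have "mellin_term (snd p) s = rGamma s / (s + of_real (snd p))"
    using rGamma_plus1[of s] Cons.prems by (auto simp: mellin_term_def field_simps)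
  then show ?case
    using Cons by (simp add: algebra_simps)
qed simp

lemma open_halfspace_Re_gt_minus_poles: "open ({s. Re s > a} - expansion_poles xs)"
  by (intro open_Diff open_halfspace_Re_gt finite_imp_closed finite_expansion_poles)

context
  fixes \<phi> :: "real \<Rightarrow> complex" and xs C M
  assumes cont: "continuous_on {0<..1} \<phi>" and exp: "has_expansion \<phi> xs C M"
begin

lemma mellin_expansion_remainder_holomorphic:
  "(\<lambda>s. integral {0..1} (\<lambda>t. of_real t powr (s - 1) * (\<phi> t - pow_sum xs t)))
     holomorphic_on {s. Re s > -M}"
  by (rule mellin_0_holomorphic[OF continuous_on_expansion_remainder[OF cont] has_expansionD[OF exp]])

lemma zeta1_ext_analytic: "zeta1_ext xs \<phi> analytic_on ({s. Re s > -M} - expansion_poles xs)"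
proof -
  have "mellin_sum xs holomorphic_on ({s. Re s > -M} - expansion_poles xs)"
    by (rule analytic_imp_holomorphic[OF analytic_on_subset[OF mellin_sum_analytic]]) auto
  then have "zeta1_ext xs \<phi> holomorphic_on ({s. Re s > -M} - expansion_poles xs)"
    unfolding zeta1_ext_def[abs_def]
    by (intro holomorphic_intros holomorphic_on_subset[OF mellin_expansion_remainder_holomorphic]) auto
  then show ?thesis
    by (simp add: analytic_on_open[OF open_halfspace_Re_gt_minus_poles])
qed

lemma zeta1_ext_meromorphic: "zeta1_ext xs \<phi> meromorphic_on {s. Re s > -M}"
proof -
  have "(\<lambda>s. rGamma s * integral {0..1} (\<lambda>t. of_real t powr (s - 1) * (\<phi> t - pow_sum xs t)))
          analytic_on {s. Re s > -M}"
    using mellin_expansion_remainder_holomorphic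
    by (simp add: analytic_on_open open_halfspace_Re_gt holomorphic_intros)
  then show ?thesis
    unfolding zeta1_ext_def[abs_def]
    by (intro meromorphic_intros mellin_sum_meromorphic analytic_on_imp_meromorphic_on)
qed

lemma zeta1_ext_eq_Nil:
  assumes "Re s > -M" "\<And>p. p \<in> set xs \<Longrightarrow> Re s + snd p > 0" "s \<noteq> 0"
  shows "zeta1_ext xs \<phi> s = zeta1_ext [] \<phi> s"
proof -
  have "(\<lambda>t. of_real t powr (s - 1) * (\<phi> t - pow_sum xs t)) integrable_on {0..1}"
    by (rule mellin_0_bound(1)[OF continuous_on_expansion_remainder[OF cont] has_expansionD[OF exp]])
      (use assms in auto)
  then have "((\<lambda>t. of_real t powr (s - 1) * pow_sum xs t
                   + of_real t powr (s - 1) * (\<phi> t - pow_sum xs t)) has_integral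
               (\<Sum>p\<leftarrow>xs. fst p / (s + of_real (snd p)))
               + integral {0..1} (\<lambda>t. of_real t powr (s - 1) * (\<phi> t - pow_sum xs t))) {0..1}"
    using assms by (intro has_integral_add has_integral_mellin_pow_sum integrable_integral) auto
  then have "integral {0..1} (\<lambda>t. of_real t powr (s - 1) * \<phi> t)
               = (\<Sum>p\<leftarrow>xs. fst p / (s + of_real (snd p)))
                 + integral {0..1} (\<lambda>t. of_real t powr (s - 1) * (\<phi> t - pow_sum xs t))"
    by (simp add: algebra_simps integral_unique)
  then show ?thesis
    unfolding zeta1_ext_def mellin_sum_eq[OF assms(3)] by (simp add: algebra_simps)
qed

end

lemma meromorphic_eventually_eq_at:
  assumes f: "f meromorphic_on A" and g: "g meromorphic_on A" and A: "open A" "connected A"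
    and s0: "s0 \<in> A" "eventually (\<lambda>w. f w = g w) (at s0)" and z: "z \<in> A"
  shows "eventually (\<lambda>w. f w = g w) (at z)"
proof -
  have "(\<lambda>w. f w - g w) meromorphic_on A"
    by (intro meromorphic_intros f g)
  from meromorphic_imp_constant_or_avoid[OF this A, of 0]
  consider "eventually (\<lambda>w. f w - g w = 0) (cosparse A)"
    | "eventually (\<lambda>w. f w - g w \<noteq> 0) (cosparse A)"
    by blast
  then show ?thesis
  proof cases
    case 1
    then show ?thesis
      using z by (simp add: eventually_cosparse_open_eq[OF A(1)])
  next
    case 2
    then have "eventually (\<lambda>w. f w \<noteq> g w) (at s0)"
      using s0(1) by (simp add: eventually_cosparse_open_eq[OF A(1)])
    with s0(2) have "eventually (\<lambda>w. False) (at s0)"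
      by eventually_elim auto
    then show ?thesis
      by (simp add: eventually_False)
  qed
qed

lemma analytic_eq_if_eventually_eq:
  assumes "f analytic_on {z}" "g analytic_on {z}" "eventually (\<lambda>w. f w = g w) (at z)"
  shows "f z = g z"
proof -
  have "f \<midarrow>z\<rightarrow> f z" "g \<midarrow>z\<rightarrow> g z"
    by (intro isContD analytic_at_imp_isCont assms)+
  then have "f \<midarrow>z\<rightarrow> g z"
    using assms(3) by (simp add: Lim_transform_eventually eventually_mono)
  with \<open>f \<midarrow>z\<rightarrow> f z\<close> show ?thesis
    by (rule LIM_unique)
qed

lemma sum_list_abs_snd_nonneg: "0 \<le> (\<Sum>q\<leftarrow>xs. \<bar>snd q :: real\<bar>)"
  by (induction xs) auto

lemma abs_snd_le_sum_list: "p \<in> set xs \<Longrightarrow> \<bar>snd p :: real\<bar> \<le> (\<Sum>q\<leftarrow>xs. \<bar>snd q\<bar>)"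
  by (induction xs) (auto intro: add_increasing add_increasing2 sum_list_abs_snd_nonneg)

lemma zeta1_ext_eventually_eq:
  assumes cont: "continuous_on {0<..1} \<phi>"
    and exp: "has_expansion \<phi> xs C M" and exp': "has_expansion \<phi> ys C' M'"
    and z: "Re z > -M" "Re z > -M'"
  shows "eventually (\<lambda>w. zeta1_ext xs \<phi> w = zeta1_ext ys \<phi> w) (at z)"
proof -
  define A where "A = {s. Re s > -M} \<inter> {s. Re s > -M'}"
  define R where "R = \<bar>M\<bar> + \<bar>M'\<bar> + (\<Sum>q\<leftarrow>xs @ ys. \<bar>snd q\<bar>)"
  have R: "R \<ge> \<bar>M\<bar> + \<bar>M'\<bar>"
    unfolding R_def using sum_list_abs_snd_nonneg[of xs] sum_list_abs_snd_nonneg[of ys] by simp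
  have "zeta1_ext xs \<phi> s = zeta1_ext ys \<phi> s" if s: "Re s > R" for s
  proof -
    have "Re s + snd p > 0" if "p \<in> set (xs @ ys)" for p
      using abs_snd_le_sum_list[OF that] s unfolding R_def by linarith
    moreover have "Re s > -M" "Re s > -M'" "s \<noteq> 0"
      using s R unfolding R_def by auto
    ultimately show ?thesis
      using zeta1_ext_eq_Nil[OF cont exp] zeta1_ext_eq_Nil[OF cont exp'] by simp
  qed
  then have ev: "eventually (\<lambda>w. zeta1_ext xs \<phi> w = zeta1_ext ys \<phi> w) (at (of_real (R + 1)))"
    using eventually_at_in_open'[OF open_halfspace_Re_gt, of "of_real (R + 1)" R]
    by (auto elim: eventually_mono)
  have mero: "zeta1_ext xs \<phi> meromorphic_on A" "zeta1_ext ys \<phi> meromorphic_on A"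
    unfolding A_def by (auto intro: meromorphic_on_subset[OF zeta1_ext_meromorphic[OF cont exp]]
        meromorphic_on_subset[OF zeta1_ext_meromorphic[OF cont exp']])
  have A: "open A" "connected A"
    unfolding A_def by (auto intro: convex_connected convex_Int convex_halfspace_Re_gt open_halfspace_Re_gt)
  show ?thesis
    by (rule meromorphic_eventually_eq_at[OF mero A _ ev]) (use R z in \<open>auto simp: A_def\<close>)
qed

lemma zeta1_ext_eq:
  assumes cont: "continuous_on {0<..1} \<phi>"
    and exp: "has_expansion \<phi> xs C M" and exp': "has_expansion \<phi> ys C' M'"
    and z: "Re z > -M" "Re z > -M'" "z \<notin> expansion_poles xs" "z \<notin> expansion_poles ys"
  shows "zeta1_ext xs \<phi> z = zeta1_ext ys \<phi> z"
proof (rule analytic_eq_if_eventually_eq[where f = "zeta1_ext xs \<phi>" and g = "zeta1_ext ys \<phi>"])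
  show "zeta1_ext xs \<phi> analytic_on {z}"
    by (rule analytic_on_subset[OF zeta1_ext_analytic[OF cont exp]]) (use z in auto)
  show "zeta1_ext ys \<phi> analytic_on {z}"
    by (rule analytic_on_subset[OF zeta1_ext_analytic[OF cont exp']]) (use z in auto)
  show "eventually (\<lambda>w. zeta1_ext xs \<phi> w = zeta1_ext ys \<phi> w) (at z)"
    by (rule zeta1_ext_eventually_eq[OF cont exp exp' z(1,2)])
qed

lemma meromorphic_on_UNIV_if_locally_eq:
  assumes "\<And>z. \<exists>g. g meromorphic_on {z} \<and> eventually (\<lambda>w. f w = g w) (at z)"
  shows "f meromorphic_on UNIV"
proof -
  have "f meromorphic_on {z}" for z
  proof -
    obtain g where "g meromorphic_on {z}" "eventually (\<lambda>w. f w = g w) (at z)"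
      using assms by blast
    then show ?thesis
      using meromorphic_on_cong[of "{z}" f g] by auto
  qed
  then show ?thesis
    by (subst meromorphic_on_meromorphic_at) auto
qed

lemma zeta1_ext_eventually_eq_piecewise:
  assumes cont: "continuous_on {0<..1} \<phi>" and base: "has_expansion \<phi> [] C0 \<alpha>0"
    and X: "\<And>n. has_expansion \<phi> (X n) (CX n) (real n)"
  defines "ord \<equiv> \<lambda>s. nat \<lceil>- Re s\<rceil> + 1"
  shows "eventually (\<lambda>w. (if Re w > -\<alpha>0 then zeta1_ext [] \<phi> w else zeta1_ext (X (ord w)) \<phi> w)
                          = zeta1_ext (X (ord z + 1)) \<phi> w) (at z)"
proof -
  define m where "m = ord z + 1"
  have ord: "- real (ord s) < Re s" for s
    unfolding ord_def by linarith
  have "finite (\<Union>k\<le>m. expansion_poles (X k))"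
    by simp
  then have "eventually (\<lambda>w. w \<notin> (\<Union>k\<le>m. expansion_poles (X k))) (at z)"
    using islimpt_finite islimpt_iff_eventually by blast
  moreover have "eventually (\<lambda>w. dist w z < 1/2) (at z)"
    unfolding eventually_at by (intro exI[of _ "1/2"]) auto
  ultimately show ?thesis
    unfolding m_def[symmetric]
  proof eventually_elim
    case (elim w)
    have "\<bar>Re w - Re z\<bar> < 1/2"
      using elim(2) abs_Re_le_cmod[of "w - z"] by (simp add: dist_norm)
    then have w: "Re w > - real m" "ord w \<le> m"
      using ord[of z] unfolding m_def ord_def by linarith+
    then have poles: "w \<notin> expansion_poles (X m)" "w \<notin> expansion_poles (X (ord w))"
      using elim(1) by auto
    show ?case
    proof (cases "Re w > -\<alpha>0")
      case True
      then show ?thesis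
        using zeta1_ext_eq[OF cont base X[of m], where z = w] w poles by (simp add: expansion_poles_def)
    next
      case False
      then show ?thesis
        using zeta1_ext_eq[OF cont X[of "ord w"] X[of m]] ord[of w] w poles by simp
    qed
  qed
qed

lemma zeta1_continuation_exists:
  assumes cont: "continuous_on {0<..1} \<phi>" and base: "has_expansion \<phi> [] C0 \<alpha>0"
    and exps: "\<And>M. \<exists>xs C. has_expansion \<phi> xs C M"
  shows "\<exists>f. f meromorphic_on UNIV \<and> (\<forall>s. Re s > -\<alpha>0 \<longrightarrow> f s = zeta1_ext [] \<phi> s)"
proof -
  have "\<forall>n::nat. \<exists>xs C. has_expansion \<phi> xs C (real n)"
    using exps by blast
  then obtain X CX where X: "\<And>n. has_expansion \<phi> (X n) (CX n) (real n)"
    by metis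
  define f where "f s = (if Re s > -\<alpha>0 then zeta1_ext [] \<phi> s else zeta1_ext (X (nat \<lceil>- Re s\<rceil> + 1)) \<phi> s)"
    for s
  have "\<exists>g. g meromorphic_on {z} \<and> eventually (\<lambda>w. f w = g w) (at z)" for z
  proof (intro exI conjI)
    show "eventually (\<lambda>w. f w = zeta1_ext (X (nat \<lceil>- Re z\<rceil> + 1 + 1)) \<phi> w) (at z)"
      unfolding f_def by (rule zeta1_ext_eventually_eq_piecewise[OF cont base X])
    show "zeta1_ext (X (nat \<lceil>- Re z\<rceil> + 1 + 1)) \<phi> meromorphic_on {z}"
      by (rule meromorphic_on_subset[OF zeta1_ext_meromorphic[OF cont X]]) (simp, linarith)
  qed
  then have "f meromorphic_on UNIV"
    by (rule meromorphic_on_UNIV_if_locally_eq)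
  then show ?thesis
    by (intro exI[of _ f]) (simp add: f_def)
qed

lemma zeta1_eq_zeta1_ext_Nil:
  assumes cont: "continuous_on {0<..1} \<phi>" and base: "has_expansion \<phi> [] C0 \<alpha>0"
    and exps: "\<And>M. \<exists>xs C. has_expansion \<phi> xs C M"
  shows "zeta1 \<phi> \<alpha>0 meromorphic_on UNIV" "\<And>s. Re s > -\<alpha>0 \<Longrightarrow> zeta1 \<phi> \<alpha>0 s = zeta1_ext [] \<phi> s"
proof -
  have "\<exists>f. f meromorphic_on UNIV \<and> (\<forall>s. Re s > -\<alpha>0 \<longrightarrow>
          f s = rGamma s * integral {0..1} (\<lambda>t. complex_of_real t powr (s - 1) * \<phi> t))"
    using zeta1_continuation_exists[OF assms] by (simp add: zeta1_ext_def)
  from someI_ex[OF this]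
  show "zeta1 \<phi> \<alpha>0 meromorphic_on UNIV" "\<And>s. Re s > -\<alpha>0 \<Longrightarrow> zeta1 \<phi> \<alpha>0 s = zeta1_ext [] \<phi> s"
    unfolding zeta1_def by (simp_all add: zeta1_ext_def)
qed

section \<open>Derivatives at zero\<close>

definition mellin_term_deriv :: "real \<Rightarrow> complex" where
  "mellin_term_deriv \<beta> = (if \<beta> = 0 then euler_mascheroni else 1 / of_real \<beta>)"

lemma rGamma_has_field_derivative_0: "(rGamma has_field_derivative 1) (at (0::complex))"
  using has_field_derivative_rGamma_nonpos_int[of 0 UNIV] by simp

lemma rGamma_plus1_has_field_derivative_0:
  "((\<lambda>s. rGamma (s + 1)) has_field_derivative euler_mascheroni) (at (0::complex))"
proof -
  have "(1::complex) \<notin> \<int>\<^sub>\<le>\<^sub>0"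
    by (auto elim!: nonpos_Ints_cases)
  from has_field_derivative_rGamma_no_nonpos_int[OF this, of UNIV]
  have "(rGamma has_field_derivative euler_mascheroni) (at (0 + 1 :: complex))"
    by simp
  from DERIV_chain2[OF this DERIV_add[OF DERIV_ident DERIV_const]] show ?thesis
    by simp
qed

lemma mellin_term_has_field_derivative_0:
  "(mellin_term \<beta> has_field_derivative mellin_term_deriv \<beta>) (at 0)"
proof (cases "\<beta> = 0")
  case True
  then show ?thesis
    using rGamma_plus1_has_field_derivative_0 by (simp add: mellin_term_def[abs_def] mellin_term_deriv_def)
next
  case False
  have "((\<lambda>s. rGamma s / (s + of_real \<beta>)) has_field_derivative
          (1 * (0 + of_real \<beta>) - rGamma 0 * (1 + 0)) / ((0 + of_real \<beta>) * (0 + of_real \<beta>)))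
          (at (0::complex))"
    using False by (intro DERIV_divide rGamma_has_field_derivative_0 DERIV_add DERIV_ident DERIV_const) simp
  with False show ?thesis
    by (simp add: mellin_term_def[abs_def] mellin_term_deriv_def)
qed

lemma mellin_sum_has_field_derivative_0:
  "(mellin_sum xs has_field_derivative (\<Sum>p\<leftarrow>xs. fst p * mellin_term_deriv (snd p))) (at 0)"
  by (induction xs)
    (auto simp: mellin_sum_def[abs_def] intro!: DERIV_add DERIV_cmult mellin_term_has_field_derivative_0)

lemma zeta1_ext_has_field_derivative_0:
  assumes cont: "continuous_on {0<..1} \<phi>" and exp: "has_expansion \<phi> xs C M" and M: "M > 0"
  shows "(zeta1_ext xs \<phi> has_field_derivative
           (\<Sum>p\<leftarrow>xs. fst p * mellin_term_deriv (snd p))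
           + integral {0..1} (\<lambda>t. of_real t powr (-1) * (\<phi> t - pow_sum xs t))) (at 0)"
proof -
  let ?L = "\<lambda>s. integral {0..1} (\<lambda>t. of_real t powr (s - 1) * (\<phi> t - pow_sum xs t))"
  have "?L field_differentiable at 0"
    using M by (intro holomorphic_on_imp_differentiable_at[OF mellin_expansion_remainder_holomorphic[OF cont exp]])
      (auto simp: open_halfspace_Re_gt)
  then obtain L' where "(?L has_field_derivative L') (at 0)"
    by (auto simp: field_differentiable_def)
  from DERIV_mult[OF rGamma_has_field_derivative_0 this]
  have "((\<lambda>s. rGamma s * ?L s) has_field_derivative ?L 0) (at 0)"
    by simp
  from DERIV_add[OF mellin_sum_has_field_derivative_0 this] show ?thesis
    by (simp add: zeta1_ext_def[abs_def])
qed

lemma remove_sings_zeta1_eq_zeta1_ext: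
  assumes cont: "continuous_on {0<..1} \<phi>" and base: "has_expansion \<phi> [] C0 \<alpha>0"
    and exps: "\<And>M. \<exists>xs C. has_expansion \<phi> xs C M"
    and exp: "has_expansion \<phi> xs C M" and z: "Re z > -M" "z \<notin> expansion_poles xs"
  shows "remove_sings (zeta1 \<phi> \<alpha>0) z = zeta1_ext xs \<phi> z"
proof -
  note zeta1 = zeta1_eq_zeta1_ext_Nil[OF cont base exps]
  define z0 where "z0 = complex_of_real (\<bar>\<alpha>0\<bar> + \<bar>M\<bar> + 1)"
  have "eventually (\<lambda>w. w \<in> {s. Re s > -\<alpha>0}) (at z0)"
    by (rule eventually_at_in_open'[OF open_halfspace_Re_gt]) (simp add: z0_def)
  then have "eventually (\<lambda>w. zeta1 \<phi> \<alpha>0 w = zeta1_ext [] \<phi> w) (at z0)"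
    by eventually_elim (simp add: zeta1(2))
  moreover have "eventually (\<lambda>w. zeta1_ext [] \<phi> w = zeta1_ext xs \<phi> w) (at z0)"
    by (rule zeta1_ext_eventually_eq[OF cont base exp]) (auto simp: z0_def)
  ultimately have ev0: "eventually (\<lambda>w. zeta1 \<phi> \<alpha>0 w = zeta1_ext xs \<phi> w) (at z0)"
    by eventually_elim simp
  have mero: "zeta1 \<phi> \<alpha>0 meromorphic_on {s. Re s > -M}"
    by (rule meromorphic_on_subset[OF zeta1(1)]) simp
  have conn: "connected {s. Re s > -M}"
    by (intro convex_connected convex_halfspace_Re_gt)
  have z0: "z0 \<in> {s. Re s > -M}"
    by (simp add: z0_def)
  have "eventually (\<lambda>w. zeta1 \<phi> \<alpha>0 w = zeta1_ext xs \<phi> w) (at z)"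
    by (rule meromorphic_eventually_eq_at[OF mero zeta1_ext_meromorphic[OF cont exp]
          open_halfspace_Re_gt conn z0 ev0]) (use z in simp)
  then have "remove_sings (zeta1 \<phi> \<alpha>0) z = remove_sings (zeta1_ext xs \<phi>) z"
    by (rule remove_sings_cong) simp
  also have "\<dots> = zeta1_ext xs \<phi> z"
    using z by (intro remove_sings_at_analytic analytic_on_subset[OF zeta1_ext_analytic[OF cont exp]]) auto
  finally show ?thesis .
qed

lemma deriv_zeta1:
  assumes cont: "continuous_on {0<..1} \<phi>" and base: "has_expansion \<phi> [] C0 \<alpha>0"
    and exps: "\<And>M. \<exists>xs C. has_expansion \<phi> xs C M"
    and exp: "has_expansion \<phi> xs C M" and M: "M > 0"
  shows "deriv (remove_sings (zeta1 \<phi> \<alpha>0)) 0 =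
           (\<Sum>p\<leftarrow>xs. fst p * mellin_term_deriv (snd p))
           + integral {0..1} (\<lambda>t. of_real t powr (-1) * (\<phi> t - pow_sum xs t))"
proof -
  have "eventually (\<lambda>z. z \<in> {s. Re s > -M} - expansion_poles xs) (nhds 0)"
    by (rule eventually_nhds_in_open[OF open_halfspace_Re_gt_minus_poles]) (use M in simp)
  then have "eventually (\<lambda>z. remove_sings (zeta1 \<phi> \<alpha>0) z = zeta1_ext xs \<phi> z) (nhds 0)"
  proof eventually_elim
    case (elim z)
    then show ?case
      by (intro remove_sings_zeta1_eq_zeta1_ext[OF cont base exps exp]) auto
  qed
  then have "deriv (remove_sings (zeta1 \<phi> \<alpha>0)) 0 = deriv (zeta1_ext xs \<phi>) 0"
    by (rule deriv_cong_ev) simp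
  also have "\<dots> = (\<Sum>p\<leftarrow>xs. fst p * mellin_term_deriv (snd p))
                  + integral {0..1} (\<lambda>t. of_real t powr (-1) * (\<phi> t - pow_sum xs t))"
    by (rule DERIV_imp_deriv[OF zeta1_ext_has_field_derivative_0[OF cont exp M]])
  finally show ?thesis .
qed

lemma deriv_zeta2:
  assumes cont: "continuous_on {1..} \<theta>"
    and bnd: "\<And>t. 1 \<le> t \<Longrightarrow> norm (\<theta> t - b0) \<le> C * t powr (-\<rho>)" and \<rho>: "\<rho> > 0"
  shows "deriv (zeta2 \<theta> b0) 0 = - b0 * euler_mascheroni + integral {1..} (\<lambda>t. of_real t powr (-1) * (\<theta> t - b0))"
proof (rule DERIV_imp_deriv)
  let ?J = "\<lambda>s. integral {1..} (\<lambda>t. of_real t powr (s - 1) * (\<theta> t - b0))"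
  have "?J field_differentiable at 0"
    using \<rho> by (intro holomorphic_on_imp_differentiable_at[OF mellin_inf_holomorphic[OF _ bnd]]
        continuous_intros cont) (auto simp: open_halfspace_Re_lt)
  then obtain J' where "(?J has_field_derivative J') (at 0)"
    by (auto simp: field_differentiable_def)
  from DERIV_mult[OF rGamma_has_field_derivative_0 this]
  have "((\<lambda>s. rGamma s * ?J s) has_field_derivative ?J 0) (at 0)"
    by simp
  from DERIV_add[OF DERIV_cmult[OF rGamma_plus1_has_field_derivative_0, of "- b0"] this]
  show "(zeta2 \<theta> b0 has_field_derivative - b0 * euler_mascheroni
          + integral {1..} (\<lambda>t. of_real t powr (-1) * (\<theta> t - b0))) (at 0)"
    by (simp add: zeta2_def[abs_def])
qed

section \<open>Exponential integrals\<close>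

lemma exp_neg_le_inverse:
  assumes "(t::real) > 0"
  shows "exp (-t) \<le> 1 / t"
proof -
  have "t \<le> exp t"
    using exp_ge_add_one_self[of t] by linarith
  with assms show ?thesis
    by (simp add: exp_minus field_simps)
qed

lemma abs_exp_neg_minus_one_le:
  assumes "(t::real) \<ge> 0"
  shows "\<bar>exp (-t) - 1\<bar> \<le> t"
proof -
  have "1 - t \<le> exp (-t)"
    using exp_ge_add_one_self[of "-t"] by simp
  moreover have "exp (-t) \<le> 1"
    using assms by simp
  ultimately show ?thesis
    by (simp add: abs_le_iff)
qed

lemma abs_exp_neg_minus_one_le_powr:
  fixes x \<sigma> :: real
  assumes x: "0 \<le> x" and \<sigma>: "0 < \<sigma>" "\<sigma> \<le> 1"
  shows "\<bar>exp (-x) - 1\<bar> \<le> x powr \<sigma>"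
proof (cases "x \<le> 1")
  case True
  have "x \<le> x powr \<sigma>"
    using True x \<sigma> powr_mono'[of \<sigma> 1 x] by (cases "x = 0") auto
  with abs_exp_neg_minus_one_le[OF x] show ?thesis
    by linarith
next
  case False
  have "\<bar>exp (-x) - 1\<bar> \<le> 1"
    using x by (simp add: abs_if)
  also have "1 \<le> x powr \<sigma>"
    using False \<sigma> by (simp add: ge_one_powr_ge_zero)
  finally show ?thesis .
qed

lemma norm_of_real_minus_one: "norm (complex_of_real x - 1) = \<bar>x - 1\<bar>"
  by (metis norm_of_real of_real_1 of_real_diff)

lemma of_real_powr_minus_one: "t > 0 \<Longrightarrow> complex_of_real t powr (-1) = of_real (1 / t)"
  using powr_of_real[of t "-1"] by (simp add: powr_minus_divide)

lemma mellin_0_bound_at_zero: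
  fixes R :: "real \<Rightarrow> complex"
  assumes "continuous_on {0<..1} R" "\<And>t. 0 < t \<Longrightarrow> t \<le> 1 \<Longrightarrow> norm (R t) \<le> C * t powr \<mu>"
    and "\<mu> > 0" "0 \<le> e" "e \<le> 1"
  shows "(\<lambda>t. of_real t powr (-1) * R t) integrable_on {0..e}"
    and "norm (integral {0..e} (\<lambda>t. of_real t powr (-1) * R t)) \<le> C * e powr \<mu> / \<mu>"
  using mellin_0_bound[OF assms(1,2) _ assms(4,5), of 0] assms(3) by simp_all

lemma mellin_inf_bound_at_zero:
  fixes R :: "real \<Rightarrow> complex"
  assumes "continuous_on {1..} R" "\<And>t. 1 \<le> t \<Longrightarrow> norm (R t) \<le> C * t powr (-\<rho>)"
    and "\<rho> > 0" "1 \<le> T"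
  shows "(\<lambda>t. of_real t powr (-1) * R t) integrable_on {T..}"
    and "norm (integral {T..} (\<lambda>t. of_real t powr (-1) * R t)) \<le> C * T powr (-\<rho>) / \<rho>"
  using mellin_inf_bound[OF assms(1,2) _ assms(4), of 0] assms(3) by simp_all

lemma exp_neg_bound_near_0:
  assumes "0 < t"
  shows "norm (complex_of_real (exp (-t)) - 1) \<le> 1 * t powr 1"
proof -
  have "norm (complex_of_real (exp (-t)) - 1) = \<bar>exp (-t) - 1\<bar>"
    by (rule norm_of_real_minus_one)
  also have "\<dots> \<le> t"
    using assms by (intro abs_exp_neg_minus_one_le) simp
  finally show ?thesis
    using assms by simp
qed

lemma exp_neg_bound_near_inf:
  "0 < l \<Longrightarrow> 1 \<le> t \<Longrightarrow> norm (complex_of_real (exp (- l * t))) \<le> (1 / l) * t powr (-1)"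
  using exp_neg_le_inverse[of "l * t"] by (simp add: powr_minus field_simps)

lemma mellin_exp_eq_Gamma:
  assumes s: "0 < Re s" "Re s < 1"
  shows "integral {0..1} (\<lambda>t. of_real t powr (s - 1) * (of_real (exp (-t)) - 1))
           + integral {1..} (\<lambda>t. of_real t powr (s - 1) * of_real (exp (-t))) = Gamma s - 1 / s"
proof -
  let ?e = "\<lambda>t. of_real t powr (s - 1) * complex_of_real (exp (-t))"
  have cont: "continuous_on A (\<lambda>t. complex_of_real (exp (-t)))" for A
    by (intro continuous_intros)
  have "?e integrable_on {0..1}"
    using s by (intro mellin_0_bound(1)[OF cont, of 1 0]) auto
  moreover have "?e integrable_on {1..}"
    using s exp_neg_bound_near_inf[of 1] by (intro mellin_inf_bound(1)[OF cont, of 1 1]) auto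
  ultimately have "(?e has_integral (integral {0..1} ?e + integral {1..} ?e)) {0..}"
    by (intro has_integral_Icc_Ici_combine) auto
  moreover have "(?e has_integral Gamma s) {0..}"
    using Gamma_integral_complex[OF s(1)] by (simp add: exp_minus divide_inverse)
  ultimately have Gamma: "Gamma s = integral {0..1} ?e + integral {1..} ?e"
    by (rule has_integral_unique[rotated])
  have "(\<lambda>t. of_real t powr (s - 1) * (of_real (exp (-t)) - 1)) integrable_on {0..1}"
    using s exp_neg_bound_near_0 by (intro mellin_0_bound(1)[of _ 1 1]) (auto intro!: continuous_intros)
  then have "((\<lambda>t. of_real t powr (s - 1) * (of_real (exp (-t)) - 1) + of_real t powr (s - 1)) has_integral
               integral {0..1} (\<lambda>t. of_real t powr (s - 1) * (of_real (exp (-t)) - 1)) + 1 / s) {0..1}"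
    using s by (intro has_integral_add has_integral_of_real_powr_0_1 integrable_integral) auto
  then have "integral {0..1} ?e = integral {0..1} (\<lambda>t. of_real t powr (s - 1) * (of_real (exp (-t)) - 1)) + 1 / s"
    by (simp add: algebra_simps integral_unique)
  with Gamma show ?thesis
    by simp
qed

lemma Gamma_plus1_has_field_derivative_0:
  "((\<lambda>s. Gamma (s + 1)) has_field_derivative - euler_mascheroni) (at (0::complex))"
proof -
  have "((\<lambda>s. inverse (rGamma (s + 1))) has_field_derivative
          - (inverse (rGamma (0 + 1)) * euler_mascheroni * inverse (rGamma (0 + 1)))) (at (0::complex))"
    by (rule DERIV_inverse'[OF rGamma_plus1_has_field_derivative_0]) simp
  then show ?thesis
    by (simp add: rGamma_inverse_Gamma)
qed

lemma filterlim_of_real_at_right_0: "filterlim complex_of_real (at 0) (at_right 0)"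
  unfolding filterlim_at
  by (auto intro!: tendsto_eq_intros tendsto_ident_at eventually_mono[OF eventually_at_right_less])

lemma Gamma_minus_inverse_tendsto_0:
  "((\<lambda>x. Gamma (complex_of_real x) - 1 / of_real x) \<longlongrightarrow> - euler_mascheroni) (at_right 0)"
proof (rule Lim_transform_eventually)
  have "((\<lambda>s. (Gamma (s + 1) - Gamma (0 + 1)) / (s - 0)) \<longlongrightarrow> - euler_mascheroni) (at (0::complex))"
    using Gamma_plus1_has_field_derivative_0 by (simp add: has_field_derivative_iff)
  then have "((\<lambda>s. (Gamma (s + 1) - 1) / s) \<longlongrightarrow> - euler_mascheroni) (at (0::complex))"
    by simp
  then show "((\<lambda>x. (Gamma (complex_of_real x + 1) - 1) / of_real x) \<longlongrightarrow> - euler_mascheroni) (at_right 0)"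
    by (rule filterlim_compose[OF _ filterlim_of_real_at_right_0])
  show "eventually (\<lambda>x. (Gamma (complex_of_real x + 1) - 1) / of_real x
                          = Gamma (of_real x) - 1 / of_real x) (at_right 0)"
    using eventually_at_right_less
  proof eventually_elim
    case (elim x)
    then have "complex_of_real x \<notin> \<int>\<^sub>\<le>\<^sub>0"
      using nonpos_Ints_subset_nonpos_Reals by (force simp: complex_nonpos_Reals_iff)
    then have "Gamma (1 + complex_of_real x) = of_real x * Gamma (of_real x)"
      using Gamma_plus1[of "complex_of_real x"] by (simp add: add.commute)
    with elim show ?case
      by (simp add: field_simps)
  qed
qed

lemma euler_mascheroni_integral:
  "integral {0..1} (\<lambda>t. of_real t powr (-1) * (of_real (exp (-t)) - 1))
     + integral {1..} (\<lambda>t. of_real t powr (-1) * of_real (exp (-t))) = - (euler_mascheroni :: complex)"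
proof -
  define A :: "complex \<Rightarrow> complex"
    where "A s = integral {0..1} (\<lambda>t. of_real t powr (s - 1) * (of_real (exp (-t)) - 1))
      + integral {1..} (\<lambda>t. of_real t powr (s - 1) * of_real (exp (-t)))" for s
  have "A holomorphic_on {s. Re s > -1} \<inter> {s. Re s < 1}"
    unfolding A_def using exp_neg_bound_near_0 exp_neg_bound_near_inf[of 1]
    by (intro holomorphic_intros holomorphic_on_subset[OF mellin_0_holomorphic[of _ 1 1]]
        holomorphic_on_subset[OF mellin_inf_holomorphic[of _ 1 1]]) (auto intro!: continuous_intros)
  then have "isCont A 0"
    by (intro continuous_on_interior[OF holomorphic_on_imp_continuous_on])
      (auto simp: interior_open open_Int open_halfspace_Re_gt open_halfspace_Re_lt)
  then have "((\<lambda>x. A (of_real x)) \<longlongrightarrow> A 0) (at_right 0)"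
    using filterlim_of_real_at_right_0 isCont_def filterlim_compose by blast
  moreover have "eventually (\<lambda>x. Gamma (of_real x) - 1 / of_real x = A (of_real x)) (at_right 0)"
    using eventually_at_right_real[OF zero_less_one]
    by eventually_elim (simp add: A_def mellin_exp_eq_Gamma)
  then have "((\<lambda>x. A (of_real x)) \<longlongrightarrow> - euler_mascheroni) (at_right 0)"
    by (rule Lim_transform_eventually[OF Gamma_minus_inverse_tendsto_0])
  ultimately have "A 0 = - euler_mascheroni"
    by (rule tendsto_unique[rotated]) simp
  then show ?thesis
    by (simp add: A_def)
qed

lemma integral_exp_scaled_Icc:
  assumes l: "l > 0" and T: "1 \<le> T"
  shows "integral {1..T} (\<lambda>t. of_real t powr (-1) * complex_of_real (exp (- l * t)))
       = integral {l..l * T} (\<lambda>u. of_real u powr (-1) * complex_of_real (exp (-u)))"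
proof -
  define g where "g u = of_real u powr (-1) * complex_of_real (exp (-u))" for u
  have "continuous_on {l..l * T} g"
    unfolding g_def using l
    by (intro continuous_intros continuous_on_subset[OF continuous_on_of_real_powr]) auto
  then have "(g has_integral integral {l..l * T} g) {l..l * T}"
    by (simp add: integrable_continuous_interval integrable_integral)
  from has_integral_stretch_real[OF this, of l] l
  have "((\<lambda>x. g (l * x)) has_integral (1 / l) *\<^sub>R integral {l..l * T} g) {1..T}"
    by simp
  from has_integral_mult_right[OF this, of "complex_of_real l"] l
  have "((\<lambda>x. of_real l * g (l * x)) has_integral integral {l..l * T} g) {1..T}"
    by (simp add: scaleR_conv_of_real)
  then have "((\<lambda>t. of_real t powr (-1) * of_real (exp (- l * t))) has_integral integral {l..l * T} g) {1..T}"
  proof (rule has_integral_eq[rotated])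
    fix x :: real assume "x \<in> {1..T}"
    then show "of_real l * g (l * x) = of_real x powr (-1) * of_real (exp (- l * x))"
      using l of_real_powr_minus_one[of "l * x"] of_real_powr_minus_one[of x] by (simp add: g_def)
  qed
  then show ?thesis
    unfolding g_def by (rule integral_unique)
qed

lemma integral_exp_scaled:
  assumes l: "l > 0"
  shows "integral {1..} (\<lambda>t. of_real t powr (-1) * complex_of_real (exp (- l * t)))
       = integral {l..} (\<lambda>u. of_real u powr (-1) * complex_of_real (exp (-u)))"
proof -
  define h where "h = (\<lambda>t. of_real t powr (-1) * complex_of_real (exp (- l * t)))"
  define g where "g = (\<lambda>u. of_real u powr (-1) * complex_of_real (exp (-u)))"
  have cont: "continuous_on A (\<lambda>t. complex_of_real (exp (- c * t)))" for A c
    by (intro continuous_intros)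
  have bound_h: "norm (integral {T..} h) \<le> (1 / l) * T powr (-1)" "h integrable_on {T..}" if "1 \<le> T" for T
    using mellin_inf_bound_at_zero[OF cont exp_neg_bound_near_inf[OF l] zero_less_one that]
    by (simp_all add: h_def)
  have bound_g: "norm (integral {T..} g) \<le> T powr (-1)" "g integrable_on {T..}" if "1 \<le> T" for T
    using mellin_inf_bound_at_zero[OF cont exp_neg_bound_near_inf[OF zero_less_one] zero_less_one that]
    by (simp_all add: g_def)
  have cont_Icc: "continuous_on {a..b} h" "continuous_on {a..b} g" if "a > 0" for a b
    unfolding h_def g_def using that
    by (auto intro!: continuous_intros continuous_on_subset[OF continuous_on_of_real_powr])
  have "integral {1..} h - integral {l..} g = 0"
  proof (rule eq_0_if_norm_le_powr[where a = 1 and \<delta> = "min l 1" and K = "2 / l"])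
    fix e :: real assume e: "0 < e" "e \<le> min l 1"
    define T where "T = 1 / e"
    have T: "1 \<le> T" "1 \<le> l * T"
      using e l by (auto simp: T_def field_simps)
    have "integral {1..} h = integral {1..T} h + integral {T..} h"
      using T cont_Icc(1)[of 1 T]
      by (intro integral_unique has_integral_Icc_Ici_combine bound_h integrable_continuous_interval) auto
    moreover have "integral {l..} g = integral {l..l * T} g + integral {l * T..} g"
      using T l cont_Icc(2)[of l "l * T"]
      by (intro integral_unique has_integral_Icc_Ici_combine bound_g integrable_continuous_interval) auto
    moreover have "integral {1..T} h = integral {l..l * T} g"
      unfolding h_def g_def by (rule integral_exp_scaled_Icc[OF l T(1)])
    ultimately have "norm (integral {1..} h - integral {l..} g) = norm (integral {T..} h - integral {l * T..} g)"
      by simp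
    also have "\<dots> \<le> (1 / l) * T powr (-1) + (l * T) powr (-1)"
      using norm_triangle_ineq4 bound_h(1)[OF T(1)] bound_g(1)[OF T(2)] by (smt (verit))
    also have "\<dots> = (2 / l) * e powr 1"
      using e l T by (simp add: T_def powr_minus_divide field_simps)
    finally show "norm (integral {1..} h - integral {l..} g) \<le> (2 / l) * e powr 1" .
  qed (use l in auto)
  then show ?thesis
    by (simp add: h_def g_def)
qed

lemma has_integral_of_real_powr_minus_one:
  assumes "0 < a" "a \<le> b"
  shows "((\<lambda>u. complex_of_real u powr (-1)) has_integral of_real (ln b - ln a)) {a..b}"
proof -
  have "((\<lambda>u. complex_of_real u powr (-1)) has_integral Ln (of_real b) - Ln (of_real a)) {a..b}"
  proof (rule fundamental_theorem_of_calculus[OF assms(2)])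
    fix x assume "x \<in> {a..b}"
    then have x: "x > 0"
      using assms by auto
    then have "(Ln has_field_derivative inverse (of_real x)) (at (of_real x))"
      by (intro has_field_derivative_Ln) (auto simp: nonpos_Reals_def)
    then have "((\<lambda>u. Ln (of_real u)) has_vector_derivative inverse (of_real x)) (at x within {a..b})"
      by (rule has_vector_derivative_real_field)
    with x show "((\<lambda>u. Ln (of_real u)) has_vector_derivative of_real x powr (-1)) (at x within {a..b})"
      by (simp add: of_real_powr_minus_one inverse_eq_divide)
  qed
  then show ?thesis
    using assms by (simp add: Ln_of_real)
qed

lemma exp_integral_plus_ln_eq:
  assumes l: "0 < l" "l < 1"
  shows "integral {1..} (\<lambda>t. of_real t powr (-1) * complex_of_real (exp (- l * t))) + of_real (ln l)
           + euler_mascheroni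
         = - integral {0..l} (\<lambda>u. of_real u powr (-1) * (complex_of_real (exp (-u)) - 1))"
proof -
  define f where "f = (\<lambda>u. of_real u powr (-1) * (complex_of_real (exp (-u)) - 1))"
  define g where "g = (\<lambda>u. of_real u powr (-1) * complex_of_real (exp (-u)))"
  have f_int: "f integrable_on {0..1}"
    unfolding f_def
    by (rule mellin_0_bound_at_zero(1)[OF _ exp_neg_bound_near_0]) (auto intro!: continuous_intros)
  have g_int: "g integrable_on {l..1}" "g integrable_on {1..}"
    using l exp_neg_bound_near_inf[of 1]
    by (auto simp: g_def intro!: integrable_continuous_interval continuous_intros
        continuous_on_subset[OF continuous_on_of_real_powr] mellin_inf_bound_at_zero(1)[of _ 1 1])
  have "f integrable_on {l..1}"
    by (rule integrable_subinterval_real[OF f_int]) (use l in auto)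
  then have "((\<lambda>u. f u + of_real u powr (-1)) has_integral integral {l..1} f + of_real (ln 1 - ln l)) {l..1}"
    using l by (intro has_integral_add integrable_integral has_integral_of_real_powr_minus_one) auto
  then have "integral {l..1} g = integral {l..1} f - of_real (ln l)"
    by (simp add: f_def g_def algebra_simps integral_unique)
  moreover have "integral {1..} (\<lambda>t. of_real t powr (-1) * complex_of_real (exp (- l * t)))
                   = integral {l..1} g + integral {1..} g"
    using integral_exp_scaled[OF l(1)] l g_int
    by (simp add: g_def[symmetric] integral_unique has_integral_Icc_Ici_combine)
  moreover have "integral {0..1} f = integral {0..l} f + integral {l..1} f"
    using l f_int by (intro Henstock_Kurzweil_Integration.integral_combine[symmetric]) auto
  moreover have "integral {0..1} f + integral {1..} g = - euler_mascheroni"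
    unfolding f_def g_def by (rule euler_mascheroni_integral)
  ultimately show ?thesis
    unfolding f_def[symmetric] by algebra
qed

lemma exp_integral_asymptotic:
  "((\<lambda>l. integral {1..} (\<lambda>t. of_real t powr (-1) * complex_of_real (exp (- l * t))) + of_real (ln l))
     \<longlongrightarrow> - euler_mascheroni) (at_right 0)"
proof -
  have "eventually (\<lambda>l. norm (integral {1..} (\<lambda>t. of_real t powr (-1) * complex_of_real (exp (- l * t)))
          + of_real (ln l) - (- euler_mascheroni)) \<le> l) (at_right 0)"
    using eventually_at_right_real[OF zero_less_one]
  proof eventually_elim
    case (elim l)
    have "norm (integral {0..l} (\<lambda>u. of_real u powr (-1) * (complex_of_real (exp (-u)) - 1)))
            \<le> 1 * l powr 1 / 1"
      by (rule mellin_0_bound_at_zero(2)[OF _ exp_neg_bound_near_0]) (use elim in \<open>auto intro!: continuous_intros\<close>)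
    with exp_integral_plus_ln_eq[of l] elim show ?case
      by simp
  qed
  then have "((\<lambda>l. integral {1..} (\<lambda>t. of_real t powr (-1) * complex_of_real (exp (- l * t)))
               + of_real (ln l) - (- euler_mascheroni)) \<longlongrightarrow> 0) (at_right 0)"
    by (rule Lim_null_comparison) (rule tendsto_ident_at)
  then show ?thesis
    by (subst Lim_null)
qed

section \<open>The damped heat trace\<close>

definition exp_neg_taylor :: "nat \<Rightarrow> real \<Rightarrow> real" where
  "exp_neg_taylor K x = (\<Sum>k<K. (- x) ^ k / fact k)"

lemma exp_neg_taylor_0 [simp]: "K \<ge> 1 \<Longrightarrow> exp_neg_taylor K 0 = 1"
  by (cases K) (simp_all add: exp_neg_taylor_def sum.lessThan_Suc_shift del: sum.lessThan_Suc)

lemma exp_neg_taylor_error: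
  fixes x :: real
  assumes x: "0 \<le> x" "x \<le> 1"
  shows "\<bar>exp (-x) - exp_neg_taylor K x\<bar> \<le> exp 1 * x ^ K / fact K"
proof -
  obtain t where t: "\<bar>t\<bar> \<le> \<bar>-x\<bar>"
    and e: "exp (-x) = (\<Sum>m<K. (-x) ^ m / fact m) + exp t / fact K * (-x) ^ K"
    using Maclaurin_exp_le[of "-x" K] by blast
  have "\<bar>exp (-x) - exp_neg_taylor K x\<bar> = exp t / fact K * x ^ K"
    unfolding exp_neg_taylor_def e by (simp add: abs_mult power_abs x)
  also have "\<dots> \<le> exp 1 / fact K * x ^ K"
    using t x by (intro mult_right_mono divide_right_mono) auto
  finally show ?thesis
    by simp
qed

lemma exp_neg_taylor_error_scaled:
  fixes l t :: real
  assumes l: "0 \<le> l" "l \<le> 1" and t: "0 < t" "t \<le> 1" and K: "1 \<le> K"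
  shows "\<bar>exp (- (l * t)) - exp_neg_taylor K (l * t)\<bar> \<le> exp 1 * l * t ^ K"
proof -
  have "\<bar>exp (- (l * t)) - exp_neg_taylor K (l * t)\<bar> \<le> exp 1 * (l * t) ^ K / fact K"
    using l t by (intro exp_neg_taylor_error) (auto simp: mult_le_one)
  also have "\<dots> \<le> exp 1 * (l * t) ^ K / 1"
    using l t by (intro divide_left_mono) (auto simp: fact_ge_1)
  also have "\<dots> = exp 1 * (l ^ K * t ^ K)"
    by (simp add: power_mult_distrib)
  also have "\<dots> \<le> exp 1 * (l * t ^ K)"
    using l t K power_decreasing[of 1 K l] by (intro mult_left_mono mult_right_mono) auto
  finally show ?thesis
    by (simp add: mult.assoc)
qed

definition damped_expansion ::
    "(nat \<Rightarrow> complex) \<Rightarrow> (nat \<Rightarrow> real) \<Rightarrow> real \<Rightarrow> nat \<Rightarrow> nat \<Rightarrow> (complex \<times> real) list" where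
  "damped_expansion a \<alpha> l N K =
     concat (map (\<lambda>j. map (\<lambda>k. (a j * (- of_real l) ^ k / fact k, \<alpha> j + real k)) [0..<K]) [0..<N])"

lemma sum_list_damped_expansion:
  "(\<Sum>p\<leftarrow>damped_expansion a \<alpha> l N K. F p)
     = (\<Sum>j<N. \<Sum>k<K. F (a j * (- of_real l) ^ k / fact k, \<alpha> j + real k))"
  by (induction N)
    (simp_all add: damped_expansion_def o_def atLeast0LessThan flip: sum_set_upt_conv_sum_list_nat)

lemma pow_sum_map_upt:
  "pow_sum (map (\<lambda>j. (a j, \<alpha> j)) [0..<N]) t = (\<Sum>j<N. a j * of_real (t powr \<alpha> j))"
  by (simp add: pow_sum_def o_def atLeast0LessThan flip: sum_set_upt_conv_sum_list_nat)

lemma pow_sum_damped_expansion: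
  assumes t: "t > 0"
  shows "pow_sum (damped_expansion a \<alpha> l N K) t
           = of_real (exp_neg_taylor K (l * t)) * pow_sum (map (\<lambda>j. (a j, \<alpha> j)) [0..<N]) t"
proof -
  have summand: "a j * (- of_real l) ^ k / fact k * of_real (t powr (\<alpha> j + real k))
          = of_real ((- (l * t)) ^ k / fact k) * (a j * of_real (t powr \<alpha> j))" for j k
  proof -
    have "(- (l * t)) ^ k = (- l) ^ k * t ^ k"
      by (simp add: power_mult_distrib[symmetric])
    then show ?thesis
      using t by (simp add: powr_add powr_realpow field_simps)
  qed
  have "pow_sum (damped_expansion a \<alpha> l N K) t
      = (\<Sum>j<N. \<Sum>k<K. of_real ((- (l * t)) ^ k / fact k) * (a j * of_real (t powr \<alpha> j)))"
    unfolding pow_sum_def sum_list_damped_expansion by (simp only: fst_conv snd_conv summand)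
  also have "\<dots> = (\<Sum>j<N. of_real (exp_neg_taylor K (l * t)) * (a j * of_real (t powr \<alpha> j)))"
    by (simp add: exp_neg_taylor_def sum_distrib_right)
  also have "\<dots> = of_real (exp_neg_taylor K (l * t)) * pow_sum (map (\<lambda>j. (a j, \<alpha> j)) [0..<N]) t"
    by (simp add: pow_sum_map_upt sum_distrib_left)
  finally show ?thesis .
qed

locale relative_heat_trace =
  fixes \<theta> :: "real \<Rightarrow> complex" and a :: "nat \<Rightarrow> complex" and \<alpha> :: "nat \<Rightarrow> real"
    and b0 :: complex and \<rho> :: real
  assumes cont: "continuous_on {0<..} \<theta>"
    and mono: "strict_mono \<alpha>"
    and unbounded: "filterlim \<alpha> at_top sequentially"
    and small_t: "\<And>N. (\<lambda>t. norm (\<theta> t - (\<Sum>j<N. a j * complex_of_real (t powr \<alpha> j))))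
                        \<in> O[at_right 0](\<lambda>t. t powr \<alpha> N)"
    and rho_pos: "\<rho> > 0"
    and large_t: "(\<lambda>t. norm (\<theta> t - b0)) \<in> O[at_top](\<lambda>t. t powr (- \<rho>))"
begin

abbreviation leading_terms :: "nat \<Rightarrow> (complex \<times> real) list" where
  "leading_terms N \<equiv> map (\<lambda>j. (a j, \<alpha> j)) [0..<N]"

(* the relative heat trace of H + l and H_0 + l *)
abbreviation damped :: "real \<Rightarrow> real \<Rightarrow> complex" where
  "damped l \<equiv> (\<lambda>t. complex_of_real (exp (- l * t)) * \<theta> t)"

lemma continuous_on_damped: "continuous_on {0<..} (damped l)"
  by (intro continuous_intros cont)

lemma alpha_mono: "j \<le> k \<Longrightarrow> \<alpha> j \<le> \<alpha> k"
  using mono by (simp add: strict_mono_less_eq)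

lemma exists_alpha_ge: "\<exists>N. M \<le> \<alpha> N"
  using unbounded by (simp add: filterlim_at_top eventually_sequentially) blast

lemma has_expansion_leading_terms: "\<exists>C \<ge> 0. has_expansion \<theta> (leading_terms N) C (\<alpha> N)"
proof -
  have "continuous_on {0<..1} (\<lambda>t. \<theta> t - pow_sum (leading_terms N) t)"
    by (intro continuous_on_expansion_remainder continuous_on_subset[OF cont]) auto
  moreover have "(\<lambda>t. norm (\<theta> t - pow_sum (leading_terms N) t)) \<in> O[at_right 0](\<lambda>t. t powr \<alpha> N)"
    using small_t[of N] by (simp add: pow_sum_map_upt)
  ultimately obtain C where "has_expansion \<theta> (leading_terms N) C (\<alpha> N)"
    unfolding has_expansion_def using bound_at_right_0_if_bigo by blast
  then have "has_expansion \<theta> (leading_terms N) (max C 0) (\<alpha> N)"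
    by (rule has_expansion_mono) simp
  then show ?thesis
    by (intro exI[of _ "max C 0"]) simp
qed

lemma norm_pow_sum_leading_terms_le:
  assumes t: "0 < t" "t \<le> 1"
  shows "norm (pow_sum (leading_terms N) t) \<le> (\<Sum>j<N. norm (a j)) * t powr \<alpha> 0"
proof -
  have "norm (pow_sum (leading_terms N) t) \<le> (\<Sum>j<N. norm (a j) * t powr \<alpha> j)"
    unfolding pow_sum_map_upt by (rule order_trans[OF norm_sum]) (simp add: norm_mult)
  also have "\<dots> \<le> (\<Sum>j<N. norm (a j) * t powr \<alpha> 0)"
    using t alpha_mono[of 0] by (intro sum_mono mult_left_mono powr_mono') auto
  finally show ?thesis
    by (simp add: sum_distrib_right)
qed

lemma large_t_bound: "\<exists>C \<ge> 0. \<forall>t. 1 \<le> t \<longrightarrow> norm (\<theta> t - b0) \<le> C * t powr (- \<rho>)"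
proof -
  have "continuous_on {1..} (\<lambda>t. \<theta> t - b0)"
    by (intro continuous_intros continuous_on_subset[OF cont]) auto
  from bound_at_top_if_bigo[OF this large_t]
  obtain C where C: "\<forall>t. 1 \<le> t \<longrightarrow> norm (\<theta> t - b0) \<le> C * t powr (- \<rho>)"
    by blast
  then have "C \<ge> 0"
    using order_trans[OF norm_ge_zero, of "\<theta> 1 - b0"] by force
  with C show ?thesis
    by blast
qed

lemma damped_remainder_diff_le:
  assumes l: "0 \<le> l" "l \<le> 1" and K: "1 \<le> K"
    and exp: "has_expansion \<theta> (leading_terms N) C (\<alpha> N)" "0 \<le> C"
    and M: "M \<le> \<alpha> N" "M \<le> \<alpha> 0 + real K" and t: "0 < t" "t \<le> 1"
  shows "norm ((damped l t - pow_sum (damped_expansion a \<alpha> l N K) t) - (\<theta> t - pow_sum (leading_terms N) t))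
           \<le> l * (C + exp 1 * (\<Sum>j<N. norm (a j))) * t powr M"
proof -
  define E where "E = exp (- (l * t))"
  define T where "T = exp_neg_taylor K (l * t)"
  define P where "P = pow_sum (leading_terms N) t"
  have "(damped l t - pow_sum (damped_expansion a \<alpha> l N K) t) - (\<theta> t - P)
          = of_real (E - 1) * (\<theta> t - P) + of_real (E - T) * P"
    using pow_sum_damped_expansion[OF t(1)] by (simp add: E_def T_def P_def algebra_simps)
  then have "norm ((damped l t - pow_sum (damped_expansion a \<alpha> l N K) t) - (\<theta> t - P))
               \<le> norm (of_real (E - 1) * (\<theta> t - P)) + norm (of_real (E - T) * P)"
    by (simp only: norm_triangle_ineq)
  also have "\<dots> = \<bar>E - 1\<bar> * norm (\<theta> t - P) + \<bar>E - T\<bar> * norm P"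
    by (simp only: norm_mult norm_of_real)
  also have "\<dots> \<le> l * (C * t powr M) + (exp 1 * l * t ^ K) * ((\<Sum>j<N. norm (a j)) * t powr \<alpha> 0)"
  proof (intro add_mono mult_mono)
    show "\<bar>E - 1\<bar> \<le> l"
      using abs_exp_neg_minus_one_le[of "l * t"] l t mult_left_le[of t l] by (simp add: E_def)
    show "norm (\<theta> t - P) \<le> C * t powr M"
      using has_expansionD[OF has_expansion_mono[OF exp(1) M(1)] t] exp(2) by (simp add: P_def)
    show "\<bar>E - T\<bar> \<le> exp 1 * l * t ^ K"
      unfolding E_def T_def by (rule exp_neg_taylor_error_scaled[OF l t K])
    show "norm P \<le> (\<Sum>j<N. norm (a j)) * t powr \<alpha> 0"
      unfolding P_def by (rule norm_pow_sum_leading_terms_le[OF t])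
  qed (use l t in auto)
  also have "\<dots> \<le> l * (C + exp 1 * (\<Sum>j<N. norm (a j))) * t powr M"
  proof -
    have "t ^ K * t powr \<alpha> 0 = t powr (\<alpha> 0 + real K)"
      using t by (simp add: powr_add powr_realpow)
    also have "\<dots> \<le> t powr M"
      using t M(2) by (intro powr_mono') auto
    finally have "t ^ K * t powr \<alpha> 0 \<le> t powr M" .
    then have "exp 1 * l * (\<Sum>j<N. norm (a j)) * (t ^ K * t powr \<alpha> 0)
                 \<le> exp 1 * l * (\<Sum>j<N. norm (a j)) * t powr M"
      using l by (intro mult_left_mono mult_nonneg_nonneg sum_nonneg) auto
    then show ?thesis
      by (simp add: algebra_simps)
  qed
  finally show ?thesis
    by (simp add: P_def)
qed

lemma has_expansion_damped:
  assumes l: "0 \<le> l" "l \<le> 1" and K: "1 \<le> K"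
    and exp: "has_expansion \<theta> (leading_terms N) C (\<alpha> N)" "0 \<le> C"
    and M: "M \<le> \<alpha> N" "M \<le> \<alpha> 0 + real K"
  shows "has_expansion (damped l) (damped_expansion a \<alpha> l N K) (2 * C + exp 1 * (\<Sum>j<N. norm (a j))) M"
  unfolding has_expansion_def
proof (intro allI impI)
  fix t :: real assume t: "0 < t" "t \<le> 1"
  define B where "B = C + exp 1 * (\<Sum>j<N. norm (a j))"
  have B: "0 \<le> B"
    unfolding B_def using exp(2) by (intro add_nonneg_nonneg mult_nonneg_nonneg sum_nonneg) auto
  have "norm (damped l t - pow_sum (damped_expansion a \<alpha> l N K) t)
          \<le> norm (\<theta> t - pow_sum (leading_terms N) t)
            + norm ((damped l t - pow_sum (damped_expansion a \<alpha> l N K) t) - (\<theta> t - pow_sum (leading_terms N) t))"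
    by (rule norm_triangle_sub)
  also have "\<dots> \<le> C * t powr M + l * B * t powr M"
  proof (rule add_mono)
    show "norm (\<theta> t - pow_sum (leading_terms N) t) \<le> C * t powr M"
      using has_expansionD[OF has_expansion_mono[OF exp(1) M(1)] t] exp(2) by simp
    show "norm ((damped l t - pow_sum (damped_expansion a \<alpha> l N K) t) - (\<theta> t - pow_sum (leading_terms N) t))
            \<le> l * B * t powr M"
      unfolding B_def by (rule damped_remainder_diff_le[OF l K exp M t])
  qed
  also have "\<dots> \<le> C * t powr M + 1 * B * t powr M"
    using l B by (intro add_left_mono mult_right_mono) auto
  finally show "norm (damped l t - pow_sum (damped_expansion a \<alpha> l N K) t)
                  \<le> (2 * C + exp 1 * (\<Sum>j<N. norm (a j))) * t powr M"
    by (simp add: B_def algebra_simps)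
qed

lemma exists_expansion_damped:
  assumes "0 \<le> l" "l \<le> 1"
  shows "\<exists>xs C. has_expansion (damped l) xs C M"
proof -
  obtain N where N: "M \<le> \<alpha> N"
    using exists_alpha_ge by blast
  obtain C where C: "0 \<le> C" "has_expansion \<theta> (leading_terms N) C (\<alpha> N)"
    using has_expansion_leading_terms by blast
  define K where "K = nat \<lceil>M - \<alpha> 0\<rceil> + 1"
  have K: "1 \<le> K" "M \<le> \<alpha> 0 + real K"
    unfolding K_def by linarith+
  show ?thesis
    using has_expansion_damped[OF assms K(1) C(2,1) N K(2)] by blast
qed

lemma has_expansion_damped_Nil:
  assumes "0 \<le> l"
  shows "\<exists>C0. has_expansion (damped l) [] C0 (\<alpha> 0)"
proof -
  obtain C0 where C0: "has_expansion \<theta> [] C0 (\<alpha> 0)"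
    using has_expansion_leading_terms[of 0] by auto
  have "norm (damped l t) \<le> C0 * t powr \<alpha> 0" if "0 < t" "t \<le> 1" for t
  proof -
    have "norm (damped l t) = exp (- l * t) * norm (\<theta> t)"
      by (simp add: norm_mult)
    also have "\<dots> \<le> 1 * norm (\<theta> t)"
      using assms that by (intro mult_right_mono) auto
    also have "\<dots> \<le> C0 * t powr \<alpha> 0"
      using has_expansionD[OF C0 that] by simp
    finally show ?thesis .
  qed
  then show ?thesis
    unfolding has_expansion_def by auto
qed

lemma deriv_zeta1_damped:
  assumes l: "0 \<le> l" "l \<le> 1" and N: "1 \<le> \<alpha> N" and K: "1 \<le> K" "1 \<le> \<alpha> 0 + real K"
  shows "deriv (remove_sings (zeta1 (damped l) (\<alpha> 0))) 0 =
           (\<Sum>p\<leftarrow>damped_expansion a \<alpha> l N K. fst p * mellin_term_deriv (snd p))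
           + integral {0..1} (\<lambda>t. of_real t powr (-1) * (damped l t - pow_sum (damped_expansion a \<alpha> l N K) t))"
proof -
  obtain C where C: "0 \<le> C" "has_expansion \<theta> (leading_terms N) C (\<alpha> N)"
    using has_expansion_leading_terms by blast
  obtain C0 where C0: "has_expansion (damped l) [] C0 (\<alpha> 0)"
    using has_expansion_damped_Nil l by blast
  have "continuous_on {0<..1} (damped l)"
    by (rule continuous_on_subset[OF continuous_on_damped]) auto
  from deriv_zeta1[OF this C0 exists_expansion_damped[OF l] has_expansion_damped[OF l K(1) C(2,1) N K(2)]]
  show ?thesis
    by simp
qed

lemma remainder_integral_damped_tendsto:
  assumes N: "1 \<le> \<alpha> N" and K: "1 \<le> K" "1 \<le> \<alpha> 0 + real K"
  shows "((\<lambda>l. integral {0..1} (\<lambda>t. of_real t powr (-1) * (damped l t - pow_sum (damped_expansion a \<alpha> l N K) t)))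
           \<longlongrightarrow> integral {0..1} (\<lambda>t. of_real t powr (-1) * (\<theta> t - pow_sum (leading_terms N) t))) (at_right 0)"
proof -
  obtain C where C: "0 \<le> C" "has_expansion \<theta> (leading_terms N) C (\<alpha> N)"
    using has_expansion_leading_terms by blast
  define B where "B = C + exp 1 * (\<Sum>j<N. norm (a j))"
  define R where "R l t = damped l t - pow_sum (damped_expansion a \<alpha> l N K) t" for l t
  define R0 where "R0 t = \<theta> t - pow_sum (leading_terms N) t" for t
  have cont: "continuous_on {0<..1} (R l)" "continuous_on {0<..1} R0" for l
    unfolding R_def R0_def
    by (intro continuous_on_expansion_remainder continuous_on_subset[OF continuous_on_damped]
        continuous_on_subset[OF cont]; auto)+
  have "eventually (\<lambda>l. norm (integral {0..1} (\<lambda>t. of_real t powr (-1) * R l t)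
          - integral {0..1} (\<lambda>t. of_real t powr (-1) * R0 t)) \<le> l * B) (at_right 0)"
    using eventually_at_right_real[OF zero_less_one]
  proof eventually_elim
    case (elim l)
    then have l: "0 \<le> l" "l \<le> 1"
      by auto
    have bnd: "norm (R l t) \<le> (2 * C + exp 1 * (\<Sum>j<N. norm (a j))) * t powr 1"
        "norm (R0 t) \<le> C * t powr \<alpha> N" if "0 < t" "t \<le> 1" for t
      unfolding R_def R0_def
      by (intro has_expansionD[OF has_expansion_damped[OF l K(1) C(2,1) N K(2)] that]
          has_expansionD[OF C(2) that])+
    have int: "(\<lambda>t. of_real t powr (-1) * R l t) integrable_on {0..1}"
        "(\<lambda>t. of_real t powr (-1) * R0 t) integrable_on {0..1}"
      using N by (intro mellin_0_bound_at_zero(1)[OF cont(1) bnd(1)]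
          mellin_0_bound_at_zero(1)[OF cont(2) bnd(2)]; simp)+
    have cont_diff: "continuous_on {0<..1} (\<lambda>t. R l t - R0 t)"
      by (intro continuous_on_diff cont)
    have bnd_diff: "norm (R l t - R0 t) \<le> (l * B) * t powr 1" if "0 < t" "t \<le> 1" for t
      unfolding R_def R0_def B_def using damped_remainder_diff_le[OF l K(1) C(2,1) N K(2) that] by simp
    have "norm (integral {0..1} (\<lambda>t. of_real t powr (-1) * (R l t - R0 t))) \<le> (l * B) * 1 powr 1 / 1"
      by (rule mellin_0_bound_at_zero(2)[OF cont_diff bnd_diff]) auto
    then show ?case
      by (simp add: integral_diff[OF int, symmetric] right_diff_distrib)
  qed
  then have "((\<lambda>l. integral {0..1} (\<lambda>t. of_real t powr (-1) * R l t)
                - integral {0..1} (\<lambda>t. of_real t powr (-1) * R0 t)) \<longlongrightarrow> 0) (at_right 0)"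
    by (rule Lim_null_comparison) (auto intro: tendsto_eq_intros tendsto_ident_at)
  then show ?thesis
    by (simp add: LIM_zero_iff R_def R0_def)
qed

lemma deriv_zeta1_damped_tendsto:
  "((\<lambda>l. deriv (remove_sings (zeta1 (damped l) (\<alpha> 0))) 0)
     \<longlongrightarrow> deriv (remove_sings (zeta1 \<theta> (\<alpha> 0))) 0) (at_right 0)"
proof -
  obtain N where N: "1 \<le> \<alpha> N"
    using exists_alpha_ge by blast
  define K where "K = nat \<lceil>1 - \<alpha> 0\<rceil> + 1"
  have K: "1 \<le> K" "1 \<le> \<alpha> 0 + real K"
    unfolding K_def by linarith+
  define S where "S = (\<lambda>l. \<Sum>p\<leftarrow>damped_expansion a \<alpha> l N K. fst p * mellin_term_deriv (snd p))"
  define I where "I = (\<lambda>l. integral {0..1} (\<lambda>t. of_real t powr (-1)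
                   * (damped l t - pow_sum (damped_expansion a \<alpha> l N K) t)))"
  have deriv_eq: "deriv (remove_sings (zeta1 (damped l) (\<alpha> 0))) 0 = S l + I l"
    if "0 \<le> l" "l \<le> 1" for l
    unfolding S_def I_def by (rule deriv_zeta1_damped[OF that N K])
  have "(S \<longlongrightarrow> S 0) (at_right 0)"
    unfolding S_def sum_list_damped_expansion fst_conv snd_conv
    by (intro tendsto_intros tendsto_ident_at) auto
  moreover have "(I \<longlongrightarrow> I 0) (at_right 0)"
  proof -
    have "pow_sum (damped_expansion a \<alpha> 0 N K) t = pow_sum (leading_terms N) t" if "0 < t" for t
      using pow_sum_damped_expansion[OF that] K by simp
    then have "I 0 = integral {0..1} (\<lambda>t. of_real t powr (-1) * (\<theta> t - pow_sum (leading_terms N) t))"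
      unfolding I_def by (intro integral_cong) (auto simp: le_less)
    with remainder_integral_damped_tendsto[OF N K] show ?thesis
      by (simp add: I_def)
  qed
  ultimately have lim: "((\<lambda>l. S l + I l) \<longlongrightarrow> S 0 + I 0) (at_right 0)"
    by (rule tendsto_add)
  have "eventually (\<lambda>l. S l + I l = deriv (remove_sings (zeta1 (damped l) (\<alpha> 0))) 0) (at_right 0)"
    using eventually_at_right_real[OF zero_less_one] by eventually_elim (rule deriv_eq[symmetric]; simp)
  with lim have "((\<lambda>l. deriv (remove_sings (zeta1 (damped l) (\<alpha> 0))) 0) \<longlongrightarrow> S 0 + I 0) (at_right 0)"
    by (rule Lim_transform_eventually)
  also have "S 0 + I 0 = deriv (remove_sings (zeta1 \<theta> (\<alpha> 0))) 0"
    using deriv_eq[of 0] by simp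
  finally show ?thesis .
qed

lemma deriv_zeta2_damped:
  assumes l: "0 < l"
  shows "deriv (zeta2 (damped l) 0) 0 = integral {1..} (\<lambda>t. of_real t powr (-1) * damped l t)"
proof -
  obtain C where C: "0 \<le> C" "\<And>t. 1 \<le> t \<Longrightarrow> norm (\<theta> t - b0) \<le> C * t powr (- \<rho>)"
    using large_t_bound by blast
  have "norm (damped l t - 0) \<le> ((norm b0 + C) / l) * t powr (-1)" if t: "1 \<le> t" for t
  proof -
    have "norm (\<theta> t) \<le> norm b0 + norm (\<theta> t - b0)"
      by (metis add.commute diff_add_cancel norm_triangle_ineq)
    also have "norm (\<theta> t - b0) \<le> C * t powr (- \<rho>)"
      by (rule C(2)[OF t])
    also have "\<dots> \<le> C * t powr 0"
      using t rho_pos C(1) by (intro mult_left_mono powr_mono) auto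
    finally have bound_\<theta>: "norm (\<theta> t) \<le> norm b0 + C"
      using t by simp
    have "norm (damped l t - 0) = norm (complex_of_real (exp (- l * t))) * norm (\<theta> t)"
      by (simp add: norm_mult)
    also have "\<dots> \<le> ((1 / l) * t powr (-1)) * (norm b0 + C)"
      using exp_neg_bound_near_inf[OF l t] bound_\<theta> l t by (intro mult_mono) auto
    finally show ?thesis
      by (simp add: algebra_simps)
  qed
  moreover have "continuous_on {1..} (damped l)"
    by (rule continuous_on_subset[OF continuous_on_damped]) auto
  ultimately show ?thesis
    using deriv_zeta2[of "damped l" 0 "(norm b0 + C) / l" 1] by simp
qed

lemma large_t_integral_damped_eq:
  assumes l: "0 < l"
  shows "integral {1..} (\<lambda>t. of_real t powr (-1) * damped l t)
           - integral {1..} (\<lambda>t. of_real t powr (-1) * (\<theta> t - b0))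
           - b0 * integral {1..} (\<lambda>t. of_real t powr (-1) * complex_of_real (exp (- l * t)))
         = integral {1..} (\<lambda>t. of_real t powr (-1) * ((complex_of_real (exp (- l * t)) - 1) * (\<theta> t - b0)))"
proof -
  obtain C where C: "0 \<le> C" "\<And>t. 1 \<le> t \<Longrightarrow> norm (\<theta> t - b0) \<le> C * t powr (- \<rho>)"
    using large_t_bound by blast
  have cont1: "continuous_on {1..} (\<lambda>t. \<theta> t - b0)"
    by (intro continuous_intros continuous_on_subset[OF cont]) auto
  have cont2: "continuous_on {1..} (\<lambda>t. (complex_of_real (exp (- l * t)) - 1) * (\<theta> t - b0))"
    by (intro continuous_intros cont1)
  have "norm ((complex_of_real (exp (- l * t)) - 1) * (\<theta> t - b0)) \<le> C * t powr (- \<rho>)" if "1 \<le> t" for t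
  proof -
    have "norm (complex_of_real (exp (- l * t)) - 1) \<le> 1"
      using l that by (simp add: norm_of_real_minus_one)
    then have "norm (complex_of_real (exp (- l * t)) - 1) * norm (\<theta> t - b0) \<le> 1 * (C * t powr (- \<rho>))"
      using C(2)[OF that] by (intro mult_mono) auto
    then show ?thesis
      by (simp add: norm_mult)
  qed
  then have int1: "(\<lambda>t. of_real t powr (-1) * ((complex_of_real (exp (- l * t)) - 1) * (\<theta> t - b0)))
                     integrable_on {1..}"
    by (rule mellin_inf_bound_at_zero(1)[OF cont2 _ rho_pos order_refl])
  have int2: "(\<lambda>t. of_real t powr (-1) * (\<theta> t - b0)) integrable_on {1..}"
    by (rule mellin_inf_bound_at_zero(1)[OF cont1 C(2) rho_pos order_refl])
  have int3: "(\<lambda>t. of_real t powr (-1) * complex_of_real (exp (- l * t))) integrable_on {1..}"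
    by (rule mellin_inf_bound_at_zero(1)[OF _ exp_neg_bound_near_inf[OF l] zero_less_one order_refl])
      (intro continuous_intros)
  have "integral {1..} (\<lambda>t. of_real t powr (-1) * damped l t)
        = integral {1..} (\<lambda>t. of_real t powr (-1) * ((complex_of_real (exp (- l * t)) - 1) * (\<theta> t - b0))
             + of_real t powr (-1) * (\<theta> t - b0)
             + b0 * (of_real t powr (-1) * complex_of_real (exp (- l * t))))"
    by (rule integral_cong) (simp add: algebra_simps)
  also have "\<dots> = integral {1..} (\<lambda>t. of_real t powr (-1) * ((complex_of_real (exp (- l * t)) - 1) * (\<theta> t - b0)))
                + integral {1..} (\<lambda>t. of_real t powr (-1) * (\<theta> t - b0))
                + b0 * integral {1..} (\<lambda>t. of_real t powr (-1) * complex_of_real (exp (- l * t)))"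
    using int1 int2 int3 by (simp add: integral_add integrable_add integrable_on_mult_right)
  finally show ?thesis
    by simp
qed

lemma large_t_integral_damped_tendsto:
  "((\<lambda>l. integral {1..} (\<lambda>t. of_real t powr (-1) * ((complex_of_real (exp (- l * t)) - 1) * (\<theta> t - b0))))
     \<longlongrightarrow> 0) (at_right 0)"
proof -
  obtain C where C: "0 \<le> C" "\<And>t. 1 \<le> t \<Longrightarrow> norm (\<theta> t - b0) \<le> C * t powr (- \<rho>)"
    using large_t_bound by blast
  define \<sigma> where "\<sigma> = min 1 (\<rho> / 2)"
  have \<sigma>: "0 < \<sigma>" "\<sigma> \<le> 1" "0 < \<rho> - \<sigma>"
    using rho_pos by (auto simp: \<sigma>_def)
  have "eventually (\<lambda>l. norm (integral {1..} (\<lambda>t. of_real t powr (-1)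
          * ((complex_of_real (exp (- l * t)) - 1) * (\<theta> t - b0)))) \<le> l powr \<sigma> * C / (\<rho> - \<sigma>)) (at_right 0)"
    using eventually_at_right_real[OF zero_less_one]
  proof eventually_elim
    case (elim l)
    then have l: "0 < l" by simp
    have bnd: "norm ((complex_of_real (exp (- l * t)) - 1) * (\<theta> t - b0)) \<le> (l powr \<sigma> * C) * t powr (- (\<rho> - \<sigma>))"
      if t: "1 \<le> t" for t
    proof -
      have "norm ((complex_of_real (exp (- l * t)) - 1) * (\<theta> t - b0)) = \<bar>exp (- (l * t)) - 1\<bar> * norm (\<theta> t - b0)"
        by (simp add: norm_mult norm_of_real_minus_one)
      also have "\<dots> \<le> (l * t) powr \<sigma> * (C * t powr (- \<rho>))"
        using l t \<sigma> by (intro mult_mono abs_exp_neg_minus_one_le_powr C(2)) auto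
      also have "\<dots> = (l powr \<sigma> * C) * t powr (- (\<rho> - \<sigma>))"
        using l t by (simp add: powr_mult powr_add[symmetric] algebra_simps)
      finally show ?thesis .
    qed
    have cont2: "continuous_on {1..} (\<lambda>t. (complex_of_real (exp (- l * t)) - 1) * (\<theta> t - b0))"
      by (intro continuous_intros continuous_on_subset[OF cont]) auto
    have "norm (integral {1..} (\<lambda>t. of_real t powr (-1) * ((complex_of_real (exp (- l * t)) - 1) * (\<theta> t - b0))))
                 \<le> (l powr \<sigma> * C) * 1 powr (- (\<rho> - \<sigma>)) / (\<rho> - \<sigma>)"
      by (rule mellin_inf_bound_at_zero(2)[OF cont2 bnd \<sigma>(3) order_refl])
    then show ?case
      by simp
  qed
  moreover have "((\<lambda>l. l powr \<sigma> * C / (\<rho> - \<sigma>)) \<longlongrightarrow> 0 * C / (\<rho> - \<sigma>)) (at_right 0)"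
    using \<sigma> by (intro tendsto_intros tendsto_zero_powrI[OF tendsto_ident_at tendsto_const])
      (auto intro: eventually_mono[OF eventually_at_right_less])
  then have "((\<lambda>l. l powr \<sigma> * C / (\<rho> - \<sigma>)) \<longlongrightarrow> 0) (at_right 0)"
    by simp
  ultimately show ?thesis
    by (rule Lim_null_comparison)
qed

lemma deriv_zeta2_damped_asymptotic:
  "((\<lambda>l. deriv (zeta2 (damped l) 0) 0 + b0 * of_real (ln l) - deriv (zeta2 \<theta> b0) 0) \<longlongrightarrow> 0) (at_right 0)"
proof -
  define J where "J = integral {1..} (\<lambda>t. of_real t powr (-1) * (\<theta> t - b0))"
  define E where "E l = integral {1..} (\<lambda>t. of_real t powr (-1) * complex_of_real (exp (- l * t)))" for l
  define R where "R l = integral {1..} (\<lambda>t. of_real t powr (-1)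
                          * ((complex_of_real (exp (- l * t)) - 1) * (\<theta> t - b0)))" for l
  obtain C where C: "0 \<le> C" "\<And>t. 1 \<le> t \<Longrightarrow> norm (\<theta> t - b0) \<le> C * t powr (- \<rho>)"
    using large_t_bound by blast
  have deriv_\<theta>: "deriv (zeta2 \<theta> b0) 0 = - b0 * euler_mascheroni + J"
    unfolding J_def by (rule deriv_zeta2[OF continuous_on_subset[OF cont] C(2) rho_pos]) auto
  have "((\<lambda>l. R l + b0 * (E l + of_real (ln l) + euler_mascheroni))
          \<longlongrightarrow> 0 + b0 * (- euler_mascheroni + euler_mascheroni)) (at_right 0)"
    unfolding R_def E_def by (intro tendsto_intros large_t_integral_damped_tendsto exp_integral_asymptotic)
  then have "((\<lambda>l. R l + b0 * (E l + of_real (ln l) + euler_mascheroni)) \<longlongrightarrow> 0) (at_right 0)"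
    by simp
  moreover have "eventually (\<lambda>l. R l + b0 * (E l + of_real (ln l) + euler_mascheroni)
      = deriv (zeta2 (damped l) 0) 0 + b0 * of_real (ln l) - deriv (zeta2 \<theta> b0) 0) (at_right 0)"
    using eventually_at_right_real[OF zero_less_one]
  proof eventually_elim
    case (elim l)
    then have l: "0 < l"
      by simp
    have "R l = deriv (zeta2 (damped l) 0) 0 - J - b0 * E l"
      using large_t_integral_damped_eq[OF l] deriv_zeta2_damped[OF l] by (simp add: R_def J_def E_def)
    then show ?case
      by (simp add: deriv_\<theta> algebra_simps)
  qed
  ultimately show ?thesis
    by (rule Lim_transform_eventually)
qed

end

theorem proposition2p1:
  fixes \<theta> :: "real \<Rightarrow> complex" and a :: "nat \<Rightarrow> complex" and \<alpha> :: "nat \<Rightarrow> real"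
    and b0 :: complex and \<rho> :: real
  assumes cont: "continuous_on {0<..} \<theta>"
    and mono: "strict_mono \<alpha>"
    and unbounded: "filterlim \<alpha> at_top sequentially"
    and small_t: "\<And>N. (\<lambda>t. norm (\<theta> t - (\<Sum>j<N. a j * complex_of_real (t powr \<alpha> j))))
                        \<in> O[at_right 0](\<lambda>t. t powr \<alpha> N)"
    and rho_pos: "\<rho> > 0"
    and large_t: "(\<lambda>t. norm (\<theta> t - b0)) \<in> O[at_top](\<lambda>t. t powr (- \<rho>))"
  shows "((\<lambda>l. logdet (\<lambda>t. complex_of_real (exp (- l * t)) * \<theta> t) (\<alpha> 0) 0
                 - b0 * complex_of_real (ln l) - logdet \<theta> (\<alpha> 0) b0) \<longlongrightarrow> 0) (at_right 0)"
proof -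
  interpret relative_heat_trace \<theta> a \<alpha> b0 \<rho>
    using assms by unfold_locales
  have "((\<lambda>l. - (deriv (remove_sings (zeta1 (damped l) (\<alpha> 0))) 0 - deriv (remove_sings (zeta1 \<theta> (\<alpha> 0))) 0)
              - (deriv (zeta2 (damped l) 0) 0 + b0 * of_real (ln l) - deriv (zeta2 \<theta> b0) 0))
          \<longlongrightarrow> - 0 - 0) (at_right 0)"
    by (intro tendsto_intros deriv_zeta1_damped_tendsto[THEN LIM_zero] deriv_zeta2_damped_asymptotic)
  then show ?thesis
    by (simp add: logdet_def algebra_simps)
qed

end
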